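(* Assume $p\ge2$, $h\le p$, $\sigma$ differentiable with $\sigma'$ $L$-Lipschitz and $|\sigma'(0)|\le L_0$, and $\mathbf x_1,\dots,\mathbf x_n$ i.i.d. $\mathcal N(0,I_p)$. Fix $0<R\le\|W^\star\|_F$. Let $B=o_{\max}(5Ls_{\max}\sqrt{h\log p}+L_0\sqrt h)$, $P=5\,o_{\max}L\sqrt{\log p}$, $q=\max\{1,8n^{-1}p\log p\}$. With probability at least $1-4(ne^{-p/2}+2np^{-10}+e^{-qn/(4p)})$: $H_1\preceq6qB^2I_{hp}$; and for a fixed $U$ (independent of the data) with $\|U-W^\star\|_F\le R$, $\|H_2\|\le6RqBP$ and $\|H_3\|\le12RqBP$.
   Context: $W^\star\in\mathbb R^{h\times p}$, $\mathbf o\in\mathbb R^h$, $o_{\max}=\max|\mathbf o_i|$, $s_{\max}$ the largest singular value of $W^\star$. For $W,U\in\mathbb R^{h\times p}$ with rows $W_i,U_i$ and $\mathbf g\in\mathbb R^p$: $\mathbf d(W;\mathbf g)_i=\mathbf o_i\sigma'(W_i\mathbf g)$; $\mathbf d(W,U;\mathbf g)_i=\mathbf o_i\frac{\sigma(W_i\mathbf g)-\sigma(U_i\mathbf g)}{W_i\mathbf g-U_i\mathbf g}$ (equal to $\mathbf o_i\sigma'(U_i\mathbf g)$ when the denominator vanishes); $\rho(W;\mathbf g)=\mathbf d(W;\mathbf g)\otimes\mathbf g$, $\rho(W,U;\mathbf g)=\mathbf d(W,U;\mathbf g)\otimes\mathbf g\in\mathbb R^{hp}$, where $\mathbf d\otimes\mathbf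 g$ concatenates the blocks $\mathbf d_1\mathbf g,\dots,\mathbf d_h\mathbf g$. Define $H_1=\frac1n\sum_j\rho(W^\star;\mathbf x_j)\rho(W^\star;\mathbf x_j)^T$, $H_2=\frac1n\sum_j\rho(W^\star;\mathbf x_j)(\rho(U,W^\star;\mathbf x_j)-\rho(W^\star;\mathbf x_j))^T$, $H_3=\frac1n\sum_j(\rho(U;\mathbf x_j)-\rho(W^\star;\mathbf x_j))\rho(U,W^\star;\mathbf x_j)^T$. $\|\cdot\|$ is spectral norm. *)

theory Defs
  imports "HOL-Probability.Probability"
begin

text \<open>Matrices are functions nat => nat => real used with explicit index bounds;
  vectors are functions nat => real. Row i of an h x p matrix W is (\<lambda>l. W i l), l < p.\<close>

definition row_dot :: "nat \<Rightarrow> (nat \<Rightarrow> nat \<Rightarrow> real) \<Rightarrow> nat \<Rightarrow> (nat \<Rightarrow> real) \<Rightarrow> real" where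
  "row_dot p W i g = (\<Sum>l<p. W i l * g l)"

definition dvec1 :: "(real \<Rightarrow> real) \<Rightarrow> (nat \<Rightarrow> real) \<Rightarrow> nat \<Rightarrow> (nat \<Rightarrow> nat \<Rightarrow> real)
    \<Rightarrow> (nat \<Rightarrow> real) \<Rightarrow> nat \<Rightarrow> real" where
  "dvec1 \<sigma> ov p W g i = ov i * deriv \<sigma> (row_dot p W i g)"

definition dvec2 :: "(real \<Rightarrow> real) \<Rightarrow> (nat \<Rightarrow> real) \<Rightarrow> nat \<Rightarrow> (nat \<Rightarrow> nat \<Rightarrow> real)
    \<Rightarrow> (nat \<Rightarrow> nat \<Rightarrow> real) \<Rightarrow> (nat \<Rightarrow> real) \<Rightarrow> nat \<Rightarrow> real" where
  "dvec2 \<sigma> ov p W U g i =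
     (if row_dot p W i g = row_dot p U i g then ov i * deriv \<sigma> (row_dot p U i g)
      else ov i * (\<sigma> (row_dot p W i g) - \<sigma> (row_dot p U i g)) / (row_dot p W i g - row_dot p U i g))"

text \<open>Kronecker-type concatenation d \<otimes> g in R^{hp}: entry i*p + l is d_i * g_l
  (for i < h, l < p).\<close>
definition kron :: "nat \<Rightarrow> (nat \<Rightarrow> real) \<Rightarrow> (nat \<Rightarrow> real) \<Rightarrow> nat \<Rightarrow> real" where
  "kron p d g k = d (k div p) * g (k mod p)"

definition rho1 where "rho1 \<sigma> ov p W g = kron p (dvec1 \<sigma> ov p W g) g"
definition rho2 where "rho2 \<sigma> ov p W U g = kron p (dvec2 \<sigma> ov p W U g) g"

text \<open>Empirical matrices (indices a, b < h*p). Data: x j (j < n), each x j :: nat => real.\<close>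
definition H1 :: "(real \<Rightarrow> real) \<Rightarrow> (nat \<Rightarrow> real) \<Rightarrow> nat \<Rightarrow> nat \<Rightarrow> (nat \<Rightarrow> nat \<Rightarrow> real)
    \<Rightarrow> (nat \<Rightarrow> nat \<Rightarrow> real) \<Rightarrow> nat \<Rightarrow> nat \<Rightarrow> real" where
  "H1 \<sigma> ov p n Ws x a b = (1 / real n) * (\<Sum>j<n. rho1 \<sigma> ov p Ws (x j) a * rho1 \<sigma> ov p Ws (x j) b)"

definition H2 :: "(real \<Rightarrow> real) \<Rightarrow> (nat \<Rightarrow> real) \<Rightarrow> nat \<Rightarrow> nat \<Rightarrow> (nat \<Rightarrow> nat \<Rightarrow> real)
    \<Rightarrow> (nat \<Rightarrow> nat \<Rightarrow> real) \<Rightarrow> (nat \<Rightarrow> nat \<Rightarrow> real) \<Rightarrow> nat \<Rightarrow> nat \<Rightarrow> real" where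
  "H2 \<sigma> ov p n Ws U x a b = (1 / real n) * (\<Sum>j<n. rho1 \<sigma> ov p Ws (x j) a *
       (rho2 \<sigma> ov p U Ws (x j) b - rho1 \<sigma> ov p Ws (x j) b))"

definition H3 :: "(real \<Rightarrow> real) \<Rightarrow> (nat \<Rightarrow> real) \<Rightarrow> nat \<Rightarrow> nat \<Rightarrow> (nat \<Rightarrow> nat \<Rightarrow> real)
    \<Rightarrow> (nat \<Rightarrow> nat \<Rightarrow> real) \<Rightarrow> (nat \<Rightarrow> nat \<Rightarrow> real) \<Rightarrow> nat \<Rightarrow> nat \<Rightarrow> real" where
  "H3 \<sigma> ov p n Ws U x a b = (1 / real n) * (\<Sum>j<n. (rho1 \<sigma> ov p U (x j) a - rho1 \<sigma> ov p Ws (x j) a) *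
       rho2 \<sigma> ov p U Ws (x j) b)"

definition spec_norm :: "nat \<Rightarrow> nat \<Rightarrow> (nat \<Rightarrow> nat \<Rightarrow> real) \<Rightarrow> real" where
  "spec_norm m k A = Sup {sqrt (\<Sum>i<m. (\<Sum>l<k. A i l * v l)\<^sup>2) | v. (\<Sum>l<k. (v l)\<^sup>2) \<le> 1}"

definition smax :: "nat \<Rightarrow> nat \<Rightarrow> (nat \<Rightarrow> nat \<Rightarrow> real) \<Rightarrow> real" where
  "smax m k A = spec_norm m k A"

definition frob_norm :: "nat \<Rightarrow> nat \<Rightarrow> (nat \<Rightarrow> nat \<Rightarrow> real) \<Rightarrow> real" where
  "frob_norm m k A = sqrt (\<Sum>i<m. \<Sum>l<k. (A i l)\<^sup>2)"

definition loewner_le_scalar :: "nat \<Rightarrow> (nat \<Rightarrow> nat \<Rightarrow> real) \<Rightarrow> real \<Rightarrow> bool" where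
  "loewner_le_scalar N A c \<longleftrightarrow>
     (\<forall>v. (\<Sum>a<N. \<Sum>b<N. v a * A a b * v b) \<le> c * (\<Sum>a<N. (v a)\<^sup>2))"

definition gauss_vec :: "nat \<Rightarrow> (nat \<Rightarrow> real) measure" where
  "gauss_vec p = PiM {..<p} (\<lambda>_. density lborel std_normal_density)"

definition gauss_sample :: "nat \<Rightarrow> nat \<Rightarrow> (nat \<Rightarrow> nat \<Rightarrow> real) measure" where
  "gauss_sample n p = PiM {..<n} (\<lambda>_. gauss_vec p)"

end

theory Submission
  imports Defs
begin

text \<open>Write \<open>W\<close> for \<open>W\<^sup>\<star>\<close>. Outside an exceptional event of the stated probability, every
  projection of a data point \<open>x\<^sub>j\<close> onto a row of \<open>W\<close> or of \<open>U - W\<close> is at most \<open>5 sqrt (log p)\<close>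
  times the norm of that row (Gaussian tails and a union bound over the \<open>hn\<close> pairs), and
  \<open>\<Sum>\<^sub>j x\<^sub>j x\<^sub>j\<^sup>T \<preceq> 6qn I\<close> (a \<open>1/20\<close>-net of the unit ball, the \<open>\<chi>\<^sup>2\<close> moment generating function and
  a union bound over the net).

  On that event the bounds are deterministic. Each \<open>H\<^sub>k\<close> is \<open>(1/n) \<Sum>\<^sub>j (\<alpha>\<^sub>j \<otimes> x\<^sub>j)(\<beta>\<^sub>j \<otimes> x\<^sub>j)\<^sup>T\<close>,
  whose norm Cauchy--Schwarz bounds by \<open>6q\<close> times \<open>max\<^sub>j \<parallel>\<alpha>\<^sub>j\<parallel> max\<^sub>j \<parallel>\<beta>\<^sub>j\<parallel>\<close>. The coefficient vectors are
  controlled by the projections: \<open>|d(W)\<^sub>i| \<le> o\<^sub>m\<^sub>a\<^sub>x (L\<^sub>0 + L |W\<^sub>i x\<^sub>j|)\<close>, so \<open>\<parallel>d(W)\<parallel> \<le> B\<close>; and as \<open>\<sigma>'\<close> is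
  \<open>L\<close>-Lipschitz, both \<open>d(U,W)\<^sub>i\<close> and \<open>d(U)\<^sub>i\<close> are within \<open>o\<^sub>m\<^sub>a\<^sub>x L |(U\<^sub>i - W\<^sub>i) x\<^sub>j|\<close> of \<open>d(W)\<^sub>i\<close>,
  so these differences have norm at most \<open>RP \<le> B\<close>.\<close>

section \<open>Gaussian moment generating functions\<close>

abbreviation std_normal :: "real measure" where
  "std_normal \<equiv> density lborel std_normal_density"

lemma prob_space_std_normal: "prob_space std_normal"
  by (rule prob_space_normal_density) simp

lemma prob_space_gauss_vec: "prob_space (gauss_vec p)"
  unfolding gauss_vec_def by (intro prob_space_PiM prob_space_std_normal)

lemma prob_space_gauss_sample: "prob_space (gauss_sample n p)"
  unfolding gauss_sample_def by (intro prob_space_PiM prob_space_gauss_vec)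

lemma product_sigma_finite_std_normal: "product_sigma_finite (\<lambda>_. std_normal)"
  unfolding product_sigma_finite_def
  using prob_space_std_normal prob_space_imp_sigma_finite by blast

lemma product_sigma_finite_gauss_vec: "product_sigma_finite (\<lambda>_. gauss_vec p)"
  unfolding product_sigma_finite_def
  using prob_space_gauss_vec prob_space_imp_sigma_finite by blast

lemma nn_integral_normal_density:
  assumes "0 < s"
  shows "(\<integral>\<^sup>+ y. ennreal (normal_density m s y) \<partial>lborel) = 1"
proof -
  have "(\<integral>\<^sup>+ y. ennreal (normal_density m s y) \<partial>lborel) = ennreal (\<integral>y. normal_density m s y \<partial>lborel)"
    by (rule nn_integral_eq_integral) (auto simp: integrable_normal_density assms)
  then show ?thesis using integral_normal_density[of s m] assms by simp
qed

lemma nn_integral_std_normal: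
  "f \<in> borel_measurable borel \<Longrightarrow>
    (\<integral>\<^sup>+ t. f t \<partial>std_normal) = (\<integral>\<^sup>+ t. ennreal (std_normal_density t) * f t \<partial>lborel)"
  by (subst nn_integral_density) auto

text \<open>Both moment generating functions below come from completing the square, which turns the
  integrand into a multiple of another normal density.\<close>

lemma nn_integral_std_normal_exp_linear:
  "(\<integral>\<^sup>+ y. ennreal (std_normal_density y * exp (a * y)) \<partial>lborel) = ennreal (exp (a\<^sup>2 / 2))"
proof -
  have eq: "std_normal_density y * exp (a * y) = exp (a\<^sup>2 / 2) * normal_density a 1 y" for y
  proof -
    have "- y\<^sup>2 / 2 + a * y = a\<^sup>2 / 2 + (- (y - a)\<^sup>2 / 2)"
      by (simp add: power2_eq_square field_simps)
    then have "exp (- y\<^sup>2 / 2) * exp (a * y) = exp (a\<^sup>2 / 2) * exp (- (y - a)\<^sup>2 / 2)"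
      by (metis exp_add)
    then show ?thesis unfolding normal_density_def by simp
  qed
  have "(\<integral>\<^sup>+ y. ennreal (std_normal_density y * exp (a * y)) \<partial>lborel)
      = (\<integral>\<^sup>+ y. ennreal (exp (a\<^sup>2 / 2)) * ennreal (normal_density a 1 y) \<partial>lborel)"
    by (simp add: eq ennreal_mult)
  also have "\<dots> = ennreal (exp (a\<^sup>2 / 2)) * (\<integral>\<^sup>+ y. ennreal (normal_density a 1 y) \<partial>lborel)"
    by (rule nn_integral_cmult) simp
  also have "\<dots> = ennreal (exp (a\<^sup>2 / 2))" by (simp add: nn_integral_normal_density)
  finally show ?thesis .
qed

lemma nn_integral_std_normal_exp_square:
  assumes "c < 1/2"
  shows "(\<integral>\<^sup>+ y. ennreal (std_normal_density y * exp (c * y\<^sup>2)) \<partial>lborel)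
       = ennreal (1 / sqrt (1 - 2 * c))"
proof -
  define s where "s = 1 / sqrt (1 - 2 * c)"
  have pos: "0 < 1 - 2 * c" using assms by simp
  have s0: "0 < s" unfolding s_def using pos by simp
  have s2: "s\<^sup>2 = 1 / (1 - 2 * c)" unfolding s_def using pos by (simp add: power_divide)
  have eq: "std_normal_density y * exp (c * y\<^sup>2) = s * normal_density 0 s y" for y
  proof -
    have e1: "- y\<^sup>2 / 2 + c * y\<^sup>2 = - y\<^sup>2 / (2 * s\<^sup>2)" using pos by (simp add: s2 field_simps)
    have e2: "1 / sqrt (2 * pi) = s * (1 / sqrt (2 * pi * s\<^sup>2))"
      using s0 by (simp add: real_sqrt_mult)
    show ?thesis unfolding normal_density_def
      using e1 e2 by (simp add: exp_add[symmetric])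
  qed
  have "(\<integral>\<^sup>+ y. ennreal (std_normal_density y * exp (c * y\<^sup>2)) \<partial>lborel)
      = (\<integral>\<^sup>+ y. ennreal s * ennreal (normal_density 0 s y) \<partial>lborel)"
    using s0 by (simp add: eq ennreal_mult)
  also have "\<dots> = ennreal s * (\<integral>\<^sup>+ y. ennreal (normal_density 0 s y) \<partial>lborel)"
    by (rule nn_integral_cmult) simp
  also have "\<dots> = ennreal s" using s0 by (simp add: nn_integral_normal_density)
  finally show ?thesis unfolding s_def .
qed

lemma gauss_vec_exp_linear:
  "(\<integral>\<^sup>+ x. ennreal (exp (b * (\<Sum>l<p. w l * x l))) \<partial>gauss_vec p)
     = ennreal (exp (b\<^sup>2 * (\<Sum>l<p. (w l)\<^sup>2) / 2))"
proof -
  interpret product_sigma_finite "\<lambda>_. std_normal" by (rule product_sigma_finite_std_normal)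
  have "(\<integral>\<^sup>+ x. ennreal (exp (b * (\<Sum>l<p. w l * x l))) \<partial>gauss_vec p)
     = (\<integral>\<^sup>+ x. (\<Prod>l<p. ennreal (exp (b * w l * x l))) \<partial>gauss_vec p)"
    by (simp add: sum_distrib_left exp_sum prod_ennreal mult.assoc)
  also have "\<dots> = (\<Prod>l<p. (\<integral>\<^sup>+ t. ennreal (exp (b * w l * t)) \<partial>std_normal))"
    unfolding gauss_vec_def by (rule product_nn_integral_prod) auto
  also have "\<dots> = (\<Prod>l<p. ennreal (exp ((b * w l)\<^sup>2 / 2)))"
    by (intro prod.cong refl)
      (simp add: nn_integral_std_normal ennreal_mult[symmetric] nn_integral_std_normal_exp_linear)
  also have "\<dots> = ennreal (exp (b\<^sup>2 * (\<Sum>l<p. (w l)\<^sup>2) / 2))"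
    by (simp add: prod_ennreal exp_sum[symmetric] sum_divide_distrib sum_distrib_left power_mult_distrib)
  finally show ?thesis .
qed

lemma borel_measurable_gauss_vec_dot[measurable]:
  "(\<lambda>x. \<Sum>l<p. w l * x l) \<in> borel_measurable (gauss_vec p)"
  unfolding gauss_vec_def by measurable

lemma borel_measurable_gauss_vec_dot'[measurable]:
  "(\<lambda>x. \<Sum>l<p. x l * w l) \<in> borel_measurable (gauss_vec p)"
  unfolding gauss_vec_def by measurable

text \<open>The square of a Gaussian linear form is linearised by one more Gaussian integral,
  \<open>exp (\<mu> Z\<^sup>2) = E\<^sub>g exp (sqrt (2\<mu>) Z g)\<close>, followed by Fubini.\<close>

lemma gauss_vec_exp_square_linear:
  assumes mu: "0 \<le> \<mu>" and lt: "2 * \<mu> * (\<Sum>l<p. (w l)\<^sup>2) < 1"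
  shows "(\<integral>\<^sup>+ x. ennreal (exp (\<mu> * (\<Sum>l<p. w l * x l)\<^sup>2)) \<partial>gauss_vec p)
        = ennreal (1 / sqrt (1 - 2 * (\<mu> * (\<Sum>l<p. (w l)\<^sup>2))))"
proof -
  define a where "a = sqrt (2 * \<mu>)"
  have a2: "a\<^sup>2 = 2 * \<mu>" unfolding a_def using mu by simp
  let ?Z = "\<lambda>x. \<Sum>l<p. w l * x l"
  let ?W = "\<Sum>l<p. (w l)\<^sup>2"
  interpret gv: prob_space "gauss_vec p" by (rule prob_space_gauss_vec)
  interpret ps: pair_sigma_finite "gauss_vec p" lborel
    by (simp add: pair_sigma_finite.intro gv.sigma_finite_measure_axioms
        lborel.sigma_finite_measure_axioms)
  have "(\<integral>\<^sup>+ x. ennreal (exp (\<mu> * (?Z x)\<^sup>2)) \<partial>gauss_vec p)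
      = (\<integral>\<^sup>+ x. (\<integral>\<^sup>+ g. ennreal (std_normal_density g * exp ((a * ?Z x) * g)) \<partial>lborel) \<partial>gauss_vec p)"
    by (intro nn_integral_cong) (simp add: nn_integral_std_normal_exp_linear power_mult_distrib a2)
  also have "\<dots> = (\<integral>\<^sup>+ g. (\<integral>\<^sup>+ x. ennreal (std_normal_density g * exp ((a * ?Z x) * g)) \<partial>gauss_vec p) \<partial>lborel)"
    by (rule ps.Fubini'[symmetric]) measurable
  also have "\<dots> = (\<integral>\<^sup>+ g. ennreal (std_normal_density g)
                       * (\<integral>\<^sup>+ x. ennreal (exp ((a * g) * ?Z x)) \<partial>gauss_vec p) \<partial>lborel)"
    by (intro nn_integral_cong, subst nn_integral_cmult[symmetric]) (auto simp: ennreal_mult mult_ac)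
  also have "\<dots> = (\<integral>\<^sup>+ g. ennreal (std_normal_density g * exp ((\<mu> * ?W) * g\<^sup>2)) \<partial>lborel)"
  proof (intro nn_integral_cong)
    fix g
    have "(\<integral>\<^sup>+ x. ennreal (exp ((a * g) * ?Z x)) \<partial>gauss_vec p) = ennreal (exp ((a * g)\<^sup>2 * ?W / 2))"
      by (rule gauss_vec_exp_linear)
    also have "(a * g)\<^sup>2 * ?W / 2 = (\<mu> * ?W) * g\<^sup>2" by (simp add: power_mult_distrib a2)
    finally show "ennreal (std_normal_density g) * (\<integral>\<^sup>+ x. ennreal (exp ((a * g) * ?Z x)) \<partial>gauss_vec p)
             = ennreal (std_normal_density g * exp ((\<mu> * ?W) * g\<^sup>2))"
      by (simp add: ennreal_mult)
  qed
  also have "\<dots> = ennreal (1 / sqrt (1 - 2 * (\<mu> * ?W)))"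
    by (rule nn_integral_std_normal_exp_square) (use lt in simp)
  finally show ?thesis .
qed

lemma borel_measurable_gauss_sample_component[measurable]:
  "(\<lambda>x. x j l) \<in> borel_measurable (gauss_sample n p)"
proof (cases "j < n \<and> l < p")
  case True
  have row: "(\<lambda>x. x j) \<in> measurable (gauss_sample n p) (gauss_vec p)"
    unfolding gauss_sample_def using True by (intro measurable_component_singleton) auto
  have "(\<lambda>y. y l) \<in> measurable (PiM {..<p} (\<lambda>_. std_normal)) std_normal"
    using True by (intro measurable_component_singleton) auto
  also have "measurable (PiM {..<p} (\<lambda>_. std_normal)) std_normal
           = borel_measurable (PiM {..<p} (\<lambda>_. std_normal))"
    by (rule measurable_cong_sets) auto
  finally have "(\<lambda>y. y l) \<in> borel_measurable (gauss_vec p)" unfolding gauss_vec_def .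
  then show ?thesis by (rule measurable_compose[OF row])
next
  case False
  text \<open>Outside the index range the component is the constant dictated by \<open>PiE\<close>.\<close>
  have "\<And>x. x \<in> space (gauss_sample n p) \<Longrightarrow> x j l = (if j < n then undefined else undefined l)"
    using False unfolding gauss_sample_def gauss_vec_def
    by (auto simp: space_PiM PiE_def extensional_def Pi_def)
  then show ?thesis
    by (rule measurable_cong[THEN iffD2, of _ _ "\<lambda>_. if j < n then undefined else undefined l"]) auto
qed

lemma emeasure_greater_le_nn_integral_exp:
  fixes f :: "'a \<Rightarrow> real"
  assumes [measurable]: "f \<in> borel_measurable M" and "0 \<le> b"
  shows "emeasure M {x\<in>space M. t < f x} \<le> (\<integral>\<^sup>+ x. ennreal (exp (b * (f x - t))) \<partial>M)"
proof -
  have "emeasure M {x\<in>space M. t < f x} = (\<integral>\<^sup>+ x. indicator {x\<in>space M. t < f x} x \<partial>M)"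
    by (rule nn_integral_indicator[symmetric]) measurable
  also have "\<dots> \<le> (\<integral>\<^sup>+ x. ennreal (exp (b * (f x - t))) \<partial>M)"
  proof (rule nn_integral_mono)
    fix x
    have "t < f x \<Longrightarrow> 1 \<le> exp (b * (f x - t))" using \<open>0 \<le> b\<close> by simp
    then show "indicator {x\<in>space M. t < f x} x \<le> ennreal (exp (b * (f x - t)))"
      by (simp add: indicator_def)
  qed
  finally show ?thesis .
qed

lemma gauss_sample_nn_integral_prod:
  assumes [measurable]: "G \<in> borel_measurable (gauss_vec p)"
  shows "(\<integral>\<^sup>+ x. (\<Prod>j<n. G (x j)) \<partial>gauss_sample n p) = (\<integral>\<^sup>+ y. G y \<partial>gauss_vec p) ^ n"
proof -
  interpret product_sigma_finite "\<lambda>_. gauss_vec p" by (rule product_sigma_finite_gauss_vec)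
  show ?thesis unfolding gauss_sample_def by (subst product_nn_integral_prod) auto
qed

lemma gauss_sample_nn_integral_component:
  assumes [measurable]: "G \<in> borel_measurable (gauss_vec p)" and j: "j < n"
  shows "(\<integral>\<^sup>+ x. G (x j) \<partial>gauss_sample n p) = (\<integral>\<^sup>+ y. G y \<partial>gauss_vec p)"
proof -
  interpret product_sigma_finite "\<lambda>_. gauss_vec p" by (rule product_sigma_finite_gauss_vec)
  interpret gv: prob_space "gauss_vec p" by (rule prob_space_gauss_vec)
  let ?G = "\<lambda>k y. if k = j then G y else 1"
  have "(\<integral>\<^sup>+ x. G (x j) \<partial>gauss_sample n p) = (\<integral>\<^sup>+ x. (\<Prod>k<n. ?G k (x k)) \<partial>gauss_sample n p)"
    using j by (intro nn_integral_cong) (simp add: prod.delta)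
  also have "\<dots> = (\<Prod>k<n. (\<integral>\<^sup>+ y. ?G k y \<partial>gauss_vec p))"
    unfolding gauss_sample_def by (rule product_nn_integral_prod) auto
  also have "\<dots> = (\<Prod>k<n. if k = j then (\<integral>\<^sup>+ y. G y \<partial>gauss_vec p) else 1)"
    by (intro prod.cong) (simp_all add: gv.emeasure_space_1)
  also have "\<dots> = (\<integral>\<^sup>+ y. G y \<partial>gauss_vec p)"
    using j by (simp add: prod.delta)
  finally show ?thesis .
qed

lemma gauss_sample_linear_tail:
  assumes j: "j < n" and W: "0 < (\<Sum>l<p. (w l)\<^sup>2)" and t: "0 \<le> t"
  shows "emeasure (gauss_sample n p) {x\<in>space (gauss_sample n p). t < (\<Sum>l<p. w l * x j l)}
         \<le> ennreal (exp (- t\<^sup>2 / (2 * (\<Sum>l<p. (w l)\<^sup>2))))"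
proof -
  let ?W = "\<Sum>l<p. (w l)\<^sup>2" and ?Z = "\<lambda>y. \<Sum>l<p. w l * y l"
  define b where "b = t / ?W"
  have b0: "0 \<le> b" unfolding b_def using W t by simp
  have "emeasure (gauss_sample n p) {x\<in>space (gauss_sample n p). t < ?Z (x j)}
     \<le> (\<integral>\<^sup>+ x. ennreal (exp (b * (?Z (x j) - t))) \<partial>gauss_sample n p)"
    by (rule emeasure_greater_le_nn_integral_exp[OF _ b0]) measurable
  also have "\<dots> = (\<integral>\<^sup>+ x. ennreal (exp (- b * t)) * ennreal (exp (b * ?Z (x j))) \<partial>gauss_sample n p)"
    by (intro nn_integral_cong) (simp add: ennreal_mult[symmetric] exp_add[symmetric] algebra_simps)
  also have "\<dots> = ennreal (exp (- b * t)) * (\<integral>\<^sup>+ x. ennreal (exp (b * ?Z (x j))) \<partial>gauss_sample n p)"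
    by (rule nn_integral_cmult) measurable
  also have "(\<integral>\<^sup>+ x. ennreal (exp (b * ?Z (x j))) \<partial>gauss_sample n p)
      = (\<integral>\<^sup>+ y. ennreal (exp (b * ?Z y)) \<partial>gauss_vec p)"
    by (rule gauss_sample_nn_integral_component[OF _ j]) measurable
  also have "\<dots> = ennreal (exp (b\<^sup>2 * ?W / 2))" by (rule gauss_vec_exp_linear)
  also have "ennreal (exp (- b * t)) * ennreal (exp (b\<^sup>2 * ?W / 2)) = ennreal (exp (- t\<^sup>2 / (2 * ?W)))"
  proof -
    have "- b * t + b\<^sup>2 * ?W / 2 = - t\<^sup>2 / (2 * ?W)"
      unfolding b_def using W by (simp add: field_simps power2_eq_square)
    then show ?thesis by (simp add: ennreal_mult[symmetric] exp_add[symmetric])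
  qed
  finally show ?thesis .
qed

lemma gauss_sample_abs_linear_tail:
  assumes j: "j < n" and W: "0 < (\<Sum>l<p. (w l)\<^sup>2)" and t: "0 \<le> t"
  shows "emeasure (gauss_sample n p) {x\<in>space (gauss_sample n p). t < \<bar>\<Sum>l<p. w l * x j l\<bar>}
         \<le> ennreal (2 * exp (- t\<^sup>2 / (2 * (\<Sum>l<p. (w l)\<^sup>2))))"
proof -
  let ?M = "gauss_sample n p" and ?b = "exp (- t\<^sup>2 / (2 * (\<Sum>l<p. (w l)\<^sup>2)))"
  have "{x\<in>space ?M. t < \<bar>\<Sum>l<p. w l * x j l\<bar>}
      = {x\<in>space ?M. t < (\<Sum>l<p. w l * x j l)} \<union> {x\<in>space ?M. t < (\<Sum>l<p. - w l * x j l)}"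
    by (auto simp: sum_negf abs_if)
  then have "emeasure ?M {x\<in>space ?M. t < \<bar>\<Sum>l<p. w l * x j l\<bar>}
      \<le> emeasure ?M {x\<in>space ?M. t < (\<Sum>l<p. w l * x j l)}
         + emeasure ?M {x\<in>space ?M. t < (\<Sum>l<p. - w l * x j l)}"
    by (simp add: emeasure_subadditive)
  also have "\<dots> \<le> ennreal ?b + ennreal ?b"
    using gauss_sample_linear_tail[OF j, of w p t] gauss_sample_linear_tail[OF j, of "\<lambda>l. - w l" p t] W t
    by (intro add_mono) simp_all
  also have "\<dots> = ennreal (2 * ?b)"
    by (simp add: ennreal_plus[symmetric] del: ennreal_plus)
  finally show ?thesis .
qed

lemma gauss_sample_sum_squares_tail:
  assumes mu: "0 \<le> \<mu>" and W: "2 * \<mu> * (\<Sum>l<p. (w l)\<^sup>2) \<le> 1/2"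
  shows "emeasure (gauss_sample n p) {x\<in>space (gauss_sample n p). T < (\<Sum>j<n. (\<Sum>l<p. w l * x j l)\<^sup>2)}
         \<le> ennreal (sqrt 2 ^ n * exp (- \<mu> * T))"
proof -
  let ?W = "\<Sum>l<p. (w l)\<^sup>2" and ?Z = "\<lambda>y. \<Sum>l<p. w l * y l"
  let ?G = "\<lambda>y. ennreal (exp (\<mu> * (?Z y)\<^sup>2))"
  have "emeasure (gauss_sample n p) {x\<in>space (gauss_sample n p). T < (\<Sum>j<n. (?Z (x j))\<^sup>2)}
     \<le> (\<integral>\<^sup>+ x. ennreal (exp (\<mu> * ((\<Sum>j<n. (?Z (x j))\<^sup>2) - T))) \<partial>gauss_sample n p)"
    by (rule emeasure_greater_le_nn_integral_exp[OF _ mu]) measurable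
  also have "\<dots> = (\<integral>\<^sup>+ x. ennreal (exp (- \<mu> * T)) * (\<Prod>j<n. ?G (x j)) \<partial>gauss_sample n p)"
  proof (intro nn_integral_cong)
    fix x
    have "exp (\<mu> * ((\<Sum>j<n. (?Z (x j))\<^sup>2) - T)) = exp (- \<mu> * T) * (\<Prod>j<n. exp (\<mu> * (?Z (x j))\<^sup>2))"
      by (simp add: exp_add[symmetric] exp_sum[symmetric] sum_distrib_left algebra_simps)
    then show "ennreal (exp (\<mu> * ((\<Sum>j<n. (?Z (x j))\<^sup>2) - T))) = ennreal (exp (- \<mu> * T)) * (\<Prod>j<n. ?G (x j))"
      by (simp add: ennreal_mult prod_ennreal prod_nonneg)
  qed
  also have "\<dots> = ennreal (exp (- \<mu> * T)) * (\<integral>\<^sup>+ x. (\<Prod>j<n. ?G (x j)) \<partial>gauss_sample n p)"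
    by (rule nn_integral_cmult) measurable
  also have "(\<integral>\<^sup>+ x. (\<Prod>j<n. ?G (x j)) \<partial>gauss_sample n p) = (\<integral>\<^sup>+ y. ?G y \<partial>gauss_vec p) ^ n"
    by (rule gauss_sample_nn_integral_prod) measurable
  also have "\<dots> = ennreal (1 / sqrt (1 - 2 * (\<mu> * ?W))) ^ n"
    by (subst gauss_vec_exp_square_linear[OF mu]) (use W in auto)
  also have "ennreal (exp (- \<mu> * T)) * ennreal (1 / sqrt (1 - 2 * (\<mu> * ?W))) ^ n
           \<le> ennreal (sqrt 2 ^ n * exp (- \<mu> * T))"
  proof -
    have h: "1 / 2 \<le> 1 - 2 * (\<mu> * ?W)" using W by simp
    have "1 / sqrt (1 - 2 * (\<mu> * ?W)) \<le> 1 / sqrt (1/2)"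
      using h by (intro divide_left_mono) auto
    also have "1 / sqrt (1/2::real) = sqrt 2" by (simp add: real_sqrt_divide)
    finally have "(1 / sqrt (1 - 2 * (\<mu> * ?W))) ^ n \<le> sqrt 2 ^ n"
      using h by (intro power_mono) auto
    then have "exp (- \<mu> * T) * (1 / sqrt (1 - 2 * (\<mu> * ?W))) ^ n \<le> sqrt 2 ^ n * exp (- \<mu> * T)"
      by (simp add: mult.commute mult_left_mono)
    moreover have "ennreal (exp (- \<mu> * T)) * ennreal (1 / sqrt (1 - 2 * (\<mu> * ?W))) ^ n
        = ennreal (exp (- \<mu> * T) * (1 / sqrt (1 - 2 * (\<mu> * ?W))) ^ n)"
      using h by (simp add: ennreal_power ennreal_mult)
    ultimately show ?thesis by (simp add: ennreal_leI)
  qed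
  finally show ?thesis .
qed

section \<open>The empirical second moment via a net\<close>

lemma L2_set_abs: "L2_set (\<lambda>i. \<bar>f i\<bar>) A = L2_set f A"
  unfolding L2_set_def by simp

lemma abs_sum_mult_le_L2_set: "\<bar>\<Sum>i\<in>A. f i * g i\<bar> \<le> L2_set f A * L2_set g A"
  by (rule order_trans[OF sum_abs]) (simp add: abs_mult L2_set_mult_ineq)

definition vec_norm :: "nat \<Rightarrow> (nat \<Rightarrow> real) \<Rightarrow> real" where
  "vec_norm p V = L2_set V {..<p}"

text \<open>\<open>data_norm n p x V\<close> is \<open>\<parallel>X V\<parallel>\<close> and \<open>gram_le n p x C\<close> says \<open>X\<^sup>T X \<preceq> C I\<close>, where
  \<open>X\<close> is the \<open>n \<times> p\<close> data matrix with rows \<open>x j\<close>.\<close>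

definition data_norm :: "nat \<Rightarrow> nat \<Rightarrow> (nat \<Rightarrow> nat \<Rightarrow> real) \<Rightarrow> (nat \<Rightarrow> real) \<Rightarrow> real" where
  "data_norm n p x V = L2_set (\<lambda>j. \<Sum>l<p. V l * x j l) {..<n}"

definition gram_le :: "nat \<Rightarrow> nat \<Rightarrow> (nat \<Rightarrow> nat \<Rightarrow> real) \<Rightarrow> real \<Rightarrow> bool" where
  "gram_le n p x C \<longleftrightarrow> (\<forall>V. (\<Sum>j<n. (\<Sum>l<p. V l * x j l)\<^sup>2) \<le> C * (\<Sum>l<p. (V l)\<^sup>2))"

lemma vec_norm_sq: "(vec_norm p V)\<^sup>2 = (\<Sum>l<p. (V l)\<^sup>2)"
  unfolding vec_norm_def L2_set_def by (simp add: sum_nonneg)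

lemma data_norm_sq: "(data_norm n p x V)\<^sup>2 = (\<Sum>j<n. (\<Sum>l<p. V l * x j l)\<^sup>2)"
  unfolding data_norm_def L2_set_def by (simp add: sum_nonneg)

lemma data_norm_add_le: "data_norm n p x (\<lambda>l. V l + U l) \<le> data_norm n p x V + data_norm n p x U"
proof -
  have "data_norm n p x (\<lambda>l. V l + U l)
      = L2_set (\<lambda>j. (\<Sum>l<p. V l * x j l) + (\<Sum>l<p. U l * x j l)) {..<n}"
    unfolding data_norm_def by (simp add: sum.distrib distrib_right)
  also have "\<dots> \<le> data_norm n p x V + data_norm n p x U"
    unfolding data_norm_def by (rule L2_set_triangle_ineq)
  finally show ?thesis .
qed

lemma data_norm_cmult: "data_norm n p x (\<lambda>l. c * V l) = \<bar>c\<bar> * data_norm n p x V"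
proof -
  have "data_norm n p x (\<lambda>l. c * V l) = L2_set (\<lambda>j. \<bar>c\<bar> * \<bar>\<Sum>l<p. V l * x j l\<bar>) {..<n}"
    unfolding data_norm_def
    by (subst L2_set_abs[symmetric]) (simp add: sum_distrib_left[symmetric] mult.assoc abs_mult)
  also have "\<dots> = \<bar>c\<bar> * data_norm n p x V"
    unfolding data_norm_def by (simp add: L2_set_right_distrib[symmetric] L2_set_abs)
  finally show ?thesis .
qed

lemma data_norm_le: "data_norm n p x V \<le> vec_norm p V * L2_set (\<lambda>j. L2_set (x j) {..<p}) {..<n}"
proof -
  have "data_norm n p x V = L2_set (\<lambda>j. \<bar>\<Sum>l<p. V l * x j l\<bar>) {..<n}"
    unfolding data_norm_def by (simp add: L2_set_abs)
  also have "\<dots> \<le> L2_set (\<lambda>j. vec_norm p V * L2_set (x j) {..<p}) {..<n}"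
    by (intro L2_set_mono) (auto simp: vec_norm_def abs_sum_mult_le_L2_set)
  also have "\<dots> = vec_norm p V * L2_set (\<lambda>j. L2_set (x j) {..<p}) {..<n}"
    by (simp add: L2_set_right_distrib vec_norm_def)
  finally show ?thesis .
qed

lemma data_norm_cong: "(\<And>l. l < p \<Longrightarrow> V l = U l) \<Longrightarrow> data_norm n p x V = data_norm n p x U"
  unfolding data_norm_def by (intro L2_set_cong refl sum.cong) auto

text \<open>A \<open>1/20\<close>-net of the unit ball: grid points of mesh \<open>1/(20p)\<close>, so that rounding moves a
  vector by at most \<open>sqrt p / (20p) \<le> 1/20\<close>.\<close>

definition grid :: "nat \<Rightarrow> real set" where
  "grid p = (\<lambda>k. real_of_int k / (20 * real p)) ` {-(20 * int p)..20 * int p}"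

definition grid_net :: "nat \<Rightarrow> (nat \<Rightarrow> real) set" where
  "grid_net p = {w \<in> PiE {..<p} (\<lambda>_. grid p). vec_norm p w \<le> 21/20}"

lemma finite_grid_net: "finite (grid_net p)"
proof -
  have "finite (PiE {..<p} (\<lambda>_. grid p))" by (intro finite_PiE) (auto simp: grid_def)
  then show ?thesis by (rule finite_subset[rotated]) (auto simp: grid_net_def)
qed

lemma card_grid_net_le: "card (grid_net p) \<le> (40 * p + 1) ^ p"
proof -
  have "card (grid_net p) \<le> card (PiE {..<p} (\<lambda>_. grid p))"
    unfolding grid_net_def by (intro card_mono) (auto simp: grid_def intro!: finite_PiE)
  also have "\<dots> = card (grid p) ^ p" by (simp add: card_PiE)
  also have "\<dots> \<le> (40 * p + 1) ^ p"
  proof (rule power_mono)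
    have "card (grid p) \<le> card {-(20 * int p)..20 * int p}"
      unfolding grid_def by (rule card_image_le) simp
    then show "card (grid p) \<le> 40 * p + 1" by simp
  qed simp
  finally show ?thesis .
qed

lemma abs_sub_floor_div_le:
  assumes "0 < d"
  shows "\<bar>v - real_of_int \<lfloor>v * d\<rfloor> / d\<bar> \<le> 1 / d"
proof -
  have "real_of_int \<lfloor>v * d\<rfloor> \<le> v * d" "v * d < real_of_int \<lfloor>v * d\<rfloor> + 1" by linarith+
  then have "real_of_int \<lfloor>v * d\<rfloor> / d \<le> v" "v < real_of_int \<lfloor>v * d\<rfloor> / d + 1 / d"
    using assms by (simp_all add: divide_le_eq less_divide_eq add_divide_distrib[symmetric])
  then show ?thesis by (simp add: abs_le_iff)
qed

lemma floor_div_mem_grid: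
  assumes "0 < p" "\<bar>v\<bar> \<le> 1"
  shows "real_of_int \<lfloor>v * (20 * real p)\<rfloor> / (20 * real p) \<in> grid p"
proof -
  have "-1 * (20 * real p) \<le> v * (20 * real p)" "v * (20 * real p) \<le> 1 * (20 * real p)"
    using assms by (intro mult_right_mono; simp add: abs_le_iff)+
  then have "- (20 * int p) \<le> \<lfloor>v * (20 * real p)\<rfloor>" "\<lfloor>v * (20 * real p)\<rfloor> \<le> 20 * int p"
    by (simp_all add: le_floor_iff floor_le_iff)
  then show ?thesis unfolding grid_def by auto
qed

lemma grid_net_approx:
  assumes p: "0 < p" and V: "vec_norm p V \<le> 1"
  shows "\<exists>w\<in>grid_net p. vec_norm p (\<lambda>l. V l - w l) \<le> 1/20"
proof -
  define d where "d = 20 * real p"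
  have d0: "0 < d" unfolding d_def using p by simp
  define w where "w = restrict (\<lambda>l. real_of_int \<lfloor>V l * d\<rfloor> / d) {..<p}"
  have "\<bar>V l\<bar> \<le> 1" if "l < p" for l
    using member_le_L2_set[of "{..<p}" l "\<lambda>l. \<bar>V l\<bar>"] that V by (simp add: L2_set_abs vec_norm_def)
  then have w: "w \<in> PiE {..<p} (\<lambda>_. grid p)"
    unfolding w_def d_def using p by (auto intro: floor_div_mem_grid)
  have "vec_norm p (\<lambda>l. V l - w l) = L2_set (\<lambda>l. \<bar>V l - w l\<bar>) {..<p}"
    by (simp add: vec_norm_def L2_set_abs)
  also have "\<dots> \<le> L2_set (\<lambda>l. 1 / d) {..<p}"
    by (intro L2_set_mono) (auto simp: w_def abs_sub_floor_div_le[OF d0])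
  also have "\<dots> = sqrt (real p) / d" by (simp add: L2_set_constant d0 abs_of_pos)
  also have "\<dots> \<le> 1/20"
  proof -
    have "sqrt (real p) \<le> sqrt (real p * real p)" using p by (intro real_sqrt_le_mono) simp
    then show ?thesis unfolding d_def using p by (simp add: field_simps)
  qed
  finally have e: "vec_norm p (\<lambda>l. V l - w l) \<le> 1/20" .
  have "vec_norm p w = vec_norm p (\<lambda>l. V l + (- (V l - w l)))" by (simp add: vec_norm_def)
  also have "\<dots> \<le> vec_norm p V + vec_norm p (\<lambda>l. - (V l - w l))"
    unfolding vec_norm_def by (rule L2_set_triangle_ineq)
  also have "vec_norm p (\<lambda>l. - (V l - w l)) = vec_norm p (\<lambda>l. V l - w l)"
    unfolding vec_norm_def L2_set_def by (simp add: power2_commute)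
  finally have "vec_norm p w \<le> 21/20" using V e by simp
  then show ?thesis using w e unfolding grid_net_def by blast
qed

lemma data_norm_le_of_unit_ball:
  assumes unit: "\<And>V. vec_norm p V \<le> 1 \<Longrightarrow> data_norm n p x V \<le> K"
  shows "data_norm n p x U \<le> K * vec_norm p U"
proof (cases "vec_norm p U = 0")
  case True
  then have "\<And>l. l < p \<Longrightarrow> U l = 0" unfolding vec_norm_def by (subst (asm) L2_set_eq_0_iff) auto
  then have "data_norm n p x U = data_norm n p x (\<lambda>_. 0)" by (intro data_norm_cong) auto
  then show ?thesis using True by (simp add: data_norm_def L2_set_def)
next
  case False
  then have pos: "0 < vec_norm p U" by (simp add: vec_norm_def order_less_le)
  have "vec_norm p (\<lambda>l. (1 / vec_norm p U) * U l) = (1 / vec_norm p U) * vec_norm p U"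
    unfolding vec_norm_def using pos L2_set_right_distrib[of "1 / vec_norm p U" U "{..<p}"]
    by (simp add: vec_norm_def)
  then have "data_norm n p x (\<lambda>l. (1 / vec_norm p U) * U l) \<le> K" using pos by (intro unit) simp
  then have "(1 / vec_norm p U) * data_norm n p x U \<le> K"
    using pos data_norm_cmult[of n p x "1 / vec_norm p U" U] by simp
  then show ?thesis using pos by (simp add: field_simps)
qed

text \<open>The usual net argument: the supremum \<open>K\<close> of \<open>data_norm\<close> over the unit ball satisfies
  \<open>K \<le> T + K/20\<close>.\<close>

lemma data_norm_le_of_grid_net:
  assumes p: "0 < p" and T: "0 \<le> T" and net: "\<forall>w\<in>grid_net p. data_norm n p x w \<le> T"
  shows "data_norm n p x V \<le> (20/19) * T * vec_norm p V"
proof -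
  define C where "C = L2_set (\<lambda>j. L2_set (x j) {..<p}) {..<n}"
  define S where "S = data_norm n p x ` {V. vec_norm p V \<le> 1}"
  define K where "K = Sup S"
  have S_ne: "S \<noteq> {}" unfolding S_def by (auto intro!: exI[of _ "\<lambda>_. 0"] simp: vec_norm_def L2_set_def)
  have S_bdd: "bdd_above S"
  proof (rule bdd_aboveI)
    fix y assume "y \<in> S"
    then obtain V where V: "vec_norm p V \<le> 1" "y = data_norm n p x V" unfolding S_def by auto
    have "y \<le> vec_norm p V * C" unfolding V(2) C_def by (rule data_norm_le)
    also have "\<dots> \<le> 1 * C" using V(1) by (intro mult_right_mono) (auto simp: C_def)
    finally show "y \<le> C" by simp
  qed
  have le_K: "data_norm n p x V \<le> K" if "vec_norm p V \<le> 1" for V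
    unfolding K_def using that by (intro cSup_upper S_bdd) (auto simp: S_def)
  then have homog: "data_norm n p x U \<le> K * vec_norm p U" for U by (rule data_norm_le_of_unit_ball)
  have K0: "0 \<le> K" using le_K[of "\<lambda>_. 0"] by (simp add: vec_norm_def L2_set_def data_norm_def)
  have "data_norm n p x V \<le> T + K / 20" if V: "vec_norm p V \<le> 1" for V
  proof -
    obtain w where w: "w \<in> grid_net p" "vec_norm p (\<lambda>l. V l - w l) \<le> 1/20"
      using grid_net_approx[OF p V] by blast
    have "data_norm n p x V = data_norm n p x (\<lambda>l. w l + (V l - w l))" by simp
    also have "\<dots> \<le> data_norm n p x w + data_norm n p x (\<lambda>l. V l - w l)" by (rule data_norm_add_le)
    also have "\<dots> \<le> T + K * (1/20)"
      using net w(1) homog[of "\<lambda>l. V l - w l"] mult_left_mono[OF w(2) K0] by force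
    finally show ?thesis by simp
  qed
  then have "K \<le> T + K / 20" unfolding K_def by (intro cSup_least[OF S_ne]) (auto simp: S_def)
  then have "K * vec_norm p V \<le> (20/19) * T * vec_norm p V"
    by (intro mult_right_mono) (auto simp: vec_norm_def)
  then show ?thesis using homog[of V] by linarith
qed

lemma gram_le_of_grid_net:
  assumes p: "0 < p" and C: "0 \<le> C"
    and net: "\<forall>w\<in>grid_net p. (\<Sum>j<n. (\<Sum>l<p. w l * x j l)\<^sup>2) \<le> (361/400) * C"
  shows "gram_le n p x C"
  unfolding gram_le_def
proof
  fix V
  define T where "T = sqrt ((361/400) * C)"
  have "\<forall>w\<in>grid_net p. data_norm n p x w \<le> T"
    using net unfolding data_norm_def L2_set_def T_def by (auto intro: real_sqrt_le_mono)
  then have "data_norm n p x V \<le> (20/19) * T * vec_norm p V"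
    using C by (intro data_norm_le_of_grid_net[OF p]) (simp_all add: T_def)
  then have "(data_norm n p x V)\<^sup>2 \<le> ((20/19) * T * vec_norm p V)\<^sup>2"
    by (rule power_mono) (simp add: data_norm_def)
  also have "\<dots> = (400/361) * T\<^sup>2 * (vec_norm p V)\<^sup>2" by (simp add: power_mult_distrib power_divide)
  also have "\<dots> = C * (vec_norm p V)\<^sup>2" using C by (simp add: T_def)
  finally show "(\<Sum>j<n. (\<Sum>l<p. V l * x j l)\<^sup>2) \<le> C * (\<Sum>l<p. (V l)\<^sup>2)"
    by (simp only: data_norm_sq vec_norm_sq)
qed

section \<open>Spectral norm\<close>

definition mat_vec_sqnorm :: "nat \<Rightarrow> nat \<Rightarrow> (nat \<Rightarrow> nat \<Rightarrow> real) \<Rightarrow> (nat \<Rightarrow> real) \<Rightarrow> real" where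
  "mat_vec_sqnorm m k A v = (\<Sum>i<m. (\<Sum>l<k. A i l * v l)\<^sup>2)"

lemma mat_vec_sqnorm_nonneg [simp]: "0 \<le> mat_vec_sqnorm m k A v"
  unfolding mat_vec_sqnorm_def by (simp add: sum_nonneg)

lemma mat_vec_sqnorm_cmult: "mat_vec_sqnorm m k A (\<lambda>l. t * v l) = t\<^sup>2 * mat_vec_sqnorm m k A v"
proof -
  have "(\<Sum>l<k. A i l * (t * v l))\<^sup>2 = t\<^sup>2 * (\<Sum>l<k. A i l * v l)\<^sup>2" for i
  proof -
    have "(\<Sum>l<k. A i l * (t * v l)) = t * (\<Sum>l<k. A i l * v l)"
      by (simp add: sum_distrib_left mult_ac)
    then show ?thesis by (simp add: power_mult_distrib)
  qed
  then show ?thesis unfolding mat_vec_sqnorm_def by (simp only: sum_distrib_left)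
qed

lemma mat_vec_sqnorm_le: "mat_vec_sqnorm m k A v \<le> (\<Sum>i<m. \<Sum>l<k. (A i l)\<^sup>2) * (\<Sum>l<k. (v l)\<^sup>2)"
proof -
  have "mat_vec_sqnorm m k A v \<le> (\<Sum>i<m. (\<Sum>l<k. (A i l)\<^sup>2) * (\<Sum>l<k. (v l)\<^sup>2))"
    unfolding mat_vec_sqnorm_def by (intro sum_mono Cauchy_Schwarz_ineq_sum)
  then show ?thesis by (simp add: sum_distrib_right)
qed

lemma spec_norm_eq_Sup:
  "spec_norm m k A = Sup ((\<lambda>v. sqrt (mat_vec_sqnorm m k A v)) ` {v. (\<Sum>l<k. (v l)\<^sup>2) \<le> 1})"
  unfolding spec_norm_def mat_vec_sqnorm_def by (rule arg_cong[where f = Sup]) auto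

lemma bdd_above_mat_vec_sqnorm:
  "bdd_above ((\<lambda>v. sqrt (mat_vec_sqnorm m k A v)) ` {v. (\<Sum>l<k. (v l)\<^sup>2) \<le> 1})"
proof (rule bdd_aboveI2)
  fix v :: "nat \<Rightarrow> real" assume "v \<in> {v. (\<Sum>l<k. (v l)\<^sup>2) \<le> 1}"
  then have v: "(\<Sum>l<k. (v l)\<^sup>2) \<le> 1" by simp
  have "mat_vec_sqnorm m k A v \<le> (\<Sum>i<m. \<Sum>l<k. (A i l)\<^sup>2) * 1"
    using mat_vec_sqnorm_le[of m k A v] v by (meson mult_left_mono order_trans sum_nonneg zero_le_power2)
  then show "sqrt (mat_vec_sqnorm m k A v) \<le> sqrt (\<Sum>i<m. \<Sum>l<k. (A i l)\<^sup>2)" by simp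
qed

lemma sqrt_mat_vec_sqnorm_le_spec_norm:
  "(\<Sum>l<k. (v l)\<^sup>2) \<le> 1 \<Longrightarrow> sqrt (mat_vec_sqnorm m k A v) \<le> spec_norm m k A"
  unfolding spec_norm_eq_Sup by (intro cSup_upper bdd_above_mat_vec_sqnorm) auto

lemma spec_norm_nonneg: "0 \<le> spec_norm m k A"
  using sqrt_mat_vec_sqnorm_le_spec_norm[where v = "\<lambda>_. 0" and k = k and m = m and A = A] by (simp add: mat_vec_sqnorm_def)

lemma mat_vec_sqnorm_le_spec_norm: "mat_vec_sqnorm m k A v \<le> (spec_norm m k A)\<^sup>2 * (\<Sum>l<k. (v l)\<^sup>2)"
proof (cases "(\<Sum>l<k. (v l)\<^sup>2) = 0")
  case True
  then have "\<And>l. l < k \<Longrightarrow> v l = 0" by (simp add: sum_nonneg_eq_0_iff)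
  then show ?thesis by (simp add: mat_vec_sqnorm_def)
next
  case False
  define t where "t = sqrt (\<Sum>l<k. (v l)\<^sup>2)"
  have t0: "0 < t" using False unfolding t_def by (simp add: sum_nonneg order_less_le)
  have t2: "t\<^sup>2 = (\<Sum>l<k. (v l)\<^sup>2)" unfolding t_def by (simp add: sum_nonneg)
  define u where "u l = v l / t" for l
  have "(\<Sum>l<k. (u l)\<^sup>2) = 1"
    unfolding u_def power_divide sum_divide_distrib[symmetric] t2[symmetric] using t0 by simp
  then have "sqrt (mat_vec_sqnorm m k A u) \<le> spec_norm m k A" by (simp add: sqrt_mat_vec_sqnorm_le_spec_norm)
  then have "(sqrt (mat_vec_sqnorm m k A u))\<^sup>2 \<le> (spec_norm m k A)\<^sup>2" by (rule power_mono) simp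
  then have "mat_vec_sqnorm m k A u \<le> (spec_norm m k A)\<^sup>2" by simp
  moreover have "mat_vec_sqnorm m k A v = t\<^sup>2 * mat_vec_sqnorm m k A u"
    using t0 mat_vec_sqnorm_cmult[of m k A t u] by (simp add: u_def)
  ultimately show ?thesis unfolding t2[symmetric] by (simp add: mult.commute mult_left_mono)
qed

lemma spec_norm_le_iff:
  assumes "0 \<le> c"
  shows "spec_norm m k A \<le> c \<longleftrightarrow> (\<forall>v. mat_vec_sqnorm m k A v \<le> c\<^sup>2 * (\<Sum>l<k. (v l)\<^sup>2))"
proof (intro iffI allI)
  fix v
  assume "spec_norm m k A \<le> c"
  then have "(spec_norm m k A)\<^sup>2 \<le> c\<^sup>2" by (intro power_mono spec_norm_nonneg)
  then have "(spec_norm m k A)\<^sup>2 * (\<Sum>l<k. (v l)\<^sup>2) \<le> c\<^sup>2 * (\<Sum>l<k. (v l)\<^sup>2)"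
    by (intro mult_right_mono) (simp_all add: sum_nonneg)
  with mat_vec_sqnorm_le_spec_norm show "mat_vec_sqnorm m k A v \<le> c\<^sup>2 * (\<Sum>l<k. (v l)\<^sup>2)"
    by (rule order_trans)
next
  assume bound: "\<forall>v. mat_vec_sqnorm m k A v \<le> c\<^sup>2 * (\<Sum>l<k. (v l)\<^sup>2)"
  show "spec_norm m k A \<le> c"
    unfolding spec_norm_eq_Sup
  proof (rule cSup_least)
    fix y assume "y \<in> (\<lambda>v. sqrt (mat_vec_sqnorm m k A v)) ` {v. (\<Sum>l<k. (v l)\<^sup>2) \<le> 1}"
    then obtain v where v: "(\<Sum>l<k. (v l)\<^sup>2) \<le> 1" "y = sqrt (mat_vec_sqnorm m k A v)" by auto
    have "mat_vec_sqnorm m k A v \<le> c\<^sup>2 * (\<Sum>l<k. (v l)\<^sup>2)" using bound by simp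
    also have "\<dots> \<le> c\<^sup>2" using v(1) by (simp add: mult_left_le)
    finally have "sqrt (mat_vec_sqnorm m k A v) \<le> sqrt (c\<^sup>2)" by (rule real_sqrt_le_mono)
    then show "y \<le> c" unfolding v(2) using assms by simp
  qed (auto intro!: exI[of _ "\<lambda>_. 0"])
qed

lemma vec_norm_row_le_spec_norm:
  assumes "i < m"
  shows "vec_norm k (A i) \<le> spec_norm m k A"
proof (cases "vec_norm k (A i) = 0")
  case True then show ?thesis using spec_norm_nonneg by simp
next
  case False
  define r where "r = vec_norm k (A i)"
  have r0: "0 < r" using False unfolding r_def vec_norm_def by (simp add: order_less_le)
  have r2: "r\<^sup>2 = (\<Sum>l<k. (A i l)\<^sup>2)" unfolding r_def by (rule vec_norm_sq)
  define u where "u l = A i l / r" for l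
  have "(\<Sum>l<k. (u l)\<^sup>2) = 1"
    unfolding u_def power_divide sum_divide_distrib[symmetric] r2[symmetric] using r0 by simp
  have "(\<Sum>l<k. A i l * u l) = (\<Sum>l<k. (A i l)\<^sup>2) / r"
    by (simp add: u_def power2_eq_square sum_divide_distrib)
  also have "\<dots> = r" unfolding r2[symmetric] using r0 by (simp add: power2_eq_square)
  finally have "(\<Sum>l<k. A i l * u l) = r" .
  moreover have "(\<Sum>l<k. A i l * u l)\<^sup>2 \<le> mat_vec_sqnorm m k A u"
    unfolding mat_vec_sqnorm_def using assms by (intro member_le_sum) auto
  ultimately have "r\<^sup>2 \<le> mat_vec_sqnorm m k A u" by simp
  then have "r \<le> sqrt (mat_vec_sqnorm m k A u)" using r0 by (simp add: real_le_rsqrt)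
  also have "\<dots> \<le> spec_norm m k A"
    using \<open>(\<Sum>l<k. (u l)\<^sup>2) = 1\<close> by (simp add: sqrt_mat_vec_sqnorm_le_spec_norm)
  finally show ?thesis unfolding r_def .
qed

lemma frob_norm_le_spec_norm: "frob_norm h p W \<le> sqrt (real h) * spec_norm h p W"
proof -
  have "(\<Sum>i<h. \<Sum>l<p. (W i l)\<^sup>2) \<le> (\<Sum>i<h. (spec_norm h p W)\<^sup>2)"
  proof (rule sum_mono)
    fix i assume "i \<in> {..<h}"
    then have "(vec_norm p (W i))\<^sup>2 \<le> (spec_norm h p W)\<^sup>2"
      by (intro power_mono vec_norm_row_le_spec_norm) (auto simp: vec_norm_def)
    then show "(\<Sum>l<p. (W i l)\<^sup>2) \<le> (spec_norm h p W)\<^sup>2" by (simp add: vec_norm_sq)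
  qed
  then have "frob_norm h p W \<le> sqrt (real h * (spec_norm h p W)\<^sup>2)" unfolding frob_norm_def by simp
  then show ?thesis using spec_norm_nonneg[of h p W] by (simp add: real_sqrt_mult)
qed

lemma sum_sq_le_of_abs_le_vec_norm:
  assumes "\<And>i. i < h \<Longrightarrow> \<bar>f i\<bar> \<le> c * vec_norm p (D i)" and "0 \<le> c"
    and "frob_norm h p D \<le> R"
  shows "(\<Sum>i<h. (f i)\<^sup>2) \<le> (c * R)\<^sup>2"
proof -
  have "(\<Sum>i<h. (f i)\<^sup>2) \<le> (\<Sum>i<h. c\<^sup>2 * (vec_norm p (D i))\<^sup>2)"
  proof (rule sum_mono)
    fix i assume "i \<in> {..<h}"
    then have "\<bar>f i\<bar>\<^sup>2 \<le> (c * vec_norm p (D i))\<^sup>2" using assms(1) by (intro power_mono) auto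
    then show "(f i)\<^sup>2 \<le> c\<^sup>2 * (vec_norm p (D i))\<^sup>2" by (simp add: power_mult_distrib)
  qed
  also have "\<dots> = c\<^sup>2 * (frob_norm h p D)\<^sup>2"
    by (simp add: vec_norm_sq frob_norm_def sum_nonneg sum_distrib_left)
  also have "\<dots> \<le> c\<^sup>2 * R\<^sup>2"
    using assms(3) by (intro mult_left_mono power_mono) (auto simp: frob_norm_def intro!: sum_nonneg)
  finally show ?thesis by (simp add: power_mult_distrib)
qed

lemma sum_sq_add_le:
  fixes f g :: "nat \<Rightarrow> real"
  assumes "(\<Sum>i<h. (f i)\<^sup>2) \<le> A\<^sup>2" "(\<Sum>i<h. (g i)\<^sup>2) \<le> B\<^sup>2" "0 \<le> A" "0 \<le> B"
  shows "(\<Sum>i<h. (f i + g i)\<^sup>2) \<le> (A + B)\<^sup>2"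
proof -
  have "L2_set f {..<h} \<le> A" "L2_set g {..<h} \<le> B"
    using real_sqrt_le_mono[OF assms(1)] real_sqrt_le_mono[OF assms(2)] assms(3,4)
    unfolding L2_set_def by simp_all
  then have "L2_set (\<lambda>i. f i + g i) {..<h} \<le> A + B"
    using L2_set_triangle_ineq[of f g "{..<h}"] by linarith
  then have "(L2_set (\<lambda>i. f i + g i) {..<h})\<^sup>2 \<le> (A + B)\<^sup>2" by (intro power_mono) auto
  then show ?thesis unfolding L2_set_def by (simp add: sum_nonneg)
qed

section \<open>Averaged outer products of Kronecker vectors\<close>

lemma sum_lessThan_mult_split:
  fixes h p :: nat
  shows "(\<Sum>a<h * p. f a) = (\<Sum>i<h. \<Sum>l<p. f (i * p + l))"
proof (induction h)
  case (Suc h)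
  have split: "{..<Suc h * p} = {..<h * p} \<union> {h * p..<h * p + p}" by auto
  have "(\<Sum>a<Suc h * p. f a) = (\<Sum>a\<in>{..<h * p} \<union> {h * p..<h * p + p}. f a)"
    by (simp only: split)
  also have "\<dots> = (\<Sum>a<h * p. f a) + (\<Sum>a\<in>{h * p..<h * p + p}. f a)"
    by (rule sum.union_disjoint) auto
  also have "(\<Sum>a\<in>{h * p..<h * p + p}. f a) = (\<Sum>l<p. f (h * p + l))"
    using sum.shift_bounds_nat_ivl[of f 0 "h * p" p] by (simp add: lessThan_atLeast0 add.commute)
  finally show ?case using Suc by simp
qed simp

lemma sum_kron_mult:
  assumes "0 < p"
  shows "(\<Sum>a<h * p. kron p d g a * v a) = (\<Sum>i<h. d i * (\<Sum>l<p. v (i * p + l) * g l))"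
  unfolding sum_lessThan_mult_split
  using assms by (intro sum.cong refl) (simp add: kron_def sum_distrib_left mult_ac)

text \<open>The vectors \<open>\<alpha>\<^sub>j \<otimes> x\<^sub>j\<close> inherit the Gram bound of the \<open>x\<^sub>j\<close>, scaled by a bound on the \<open>\<alpha>\<^sub>j\<close>:
  Cauchy--Schwarz in the block index \<open>i\<close>, then the Gram bound blockwise.\<close>

lemma gram_le_kron:
  assumes p: "0 < p" and gram: "gram_le n p x C" and C: "0 \<le> C"
    and \<alpha>: "\<And>j. j < n \<Longrightarrow> (\<Sum>i<h. (\<alpha> j i)\<^sup>2) \<le> A\<^sup>2"
  shows "(\<Sum>j<n. (\<Sum>a<h * p. kron p (\<alpha> j) (x j) a * v a)\<^sup>2) \<le> C * A\<^sup>2 * (\<Sum>a<h * p. (v a)\<^sup>2)"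
proof -
  define c where "c j i = (\<Sum>l<p. v (i * p + l) * x j l)" for j i
  have "(\<Sum>j<n. (\<Sum>a<h * p. kron p (\<alpha> j) (x j) a * v a)\<^sup>2) = (\<Sum>j<n. (\<Sum>i<h. \<alpha> j i * c j i)\<^sup>2)"
    by (simp add: sum_kron_mult[OF p] c_def)
  also have "\<dots> \<le> (\<Sum>j<n. A\<^sup>2 * (\<Sum>i<h. (c j i)\<^sup>2))"
  proof (rule sum_mono)
    fix j assume "j \<in> {..<n}"
    then have "(\<Sum>i<h. (\<alpha> j i)\<^sup>2) * (\<Sum>i<h. (c j i)\<^sup>2) \<le> A\<^sup>2 * (\<Sum>i<h. (c j i)\<^sup>2)"
      using \<alpha>[of j] by (intro mult_right_mono) (auto intro: sum_nonneg)
    with Cauchy_Schwarz_ineq_sum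
    show "(\<Sum>i<h. \<alpha> j i * c j i)\<^sup>2 \<le> A\<^sup>2 * (\<Sum>i<h. (c j i)\<^sup>2)"
      by (rule order_trans)
  qed
  also have "\<dots> = A\<^sup>2 * (\<Sum>i<h. \<Sum>j<n. (c j i)\<^sup>2)"
    by (simp add: sum_distrib_left[symmetric] sum.swap[of _ "{..<n}"])
  also have "\<dots> \<le> A\<^sup>2 * (\<Sum>i<h. C * (\<Sum>l<p. (v (i * p + l))\<^sup>2))"
    using gram unfolding gram_le_def c_def by (intro mult_left_mono sum_mono) auto
  also have "\<dots> = C * A\<^sup>2 * (\<Sum>a<h * p. (v a)\<^sup>2)"
    by (simp add: sum_lessThan_mult_split sum_distrib_left[symmetric] mult_ac)
  finally show ?thesis .
qed

definition avg_outer :: "nat \<Rightarrow> (nat \<Rightarrow> nat \<Rightarrow> real) \<Rightarrow> (nat \<Rightarrow> nat \<Rightarrow> real) \<Rightarrow> nat \<Rightarrow> nat \<Rightarrow> real" where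
  "avg_outer n f g a b = (1 / real n) * (\<Sum>j<n. f j a * g j b)"

lemma bilinear_avg_outer:
  "(\<Sum>a<N. y a * (\<Sum>b<N. avg_outer n f g a b * v b))
     = (1 / real n) * (\<Sum>j<n. (\<Sum>a<N. f j a * y a) * (\<Sum>b<N. g j b * v b))"
proof -
  have "(\<Sum>a<N. y a * (\<Sum>b<N. avg_outer n f g a b * v b))
      = (1 / real n) * (\<Sum>a<N. \<Sum>b<N. \<Sum>j<n. (f j a * y a) * (g j b * v b))"
    by (simp add: avg_outer_def sum_distrib_left sum_distrib_right mult_ac)
  also have "(\<Sum>a<N. \<Sum>b<N. \<Sum>j<n. (f j a * y a) * (g j b * v b))
           = (\<Sum>a<N. \<Sum>j<n. \<Sum>b<N. (f j a * y a) * (g j b * v b))"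
    by (intro sum.cong refl sum.swap)
  also have "\<dots> = (\<Sum>j<n. \<Sum>a<N. \<Sum>b<N. (f j a * y a) * (g j b * v b))"
    by (rule sum.swap)
  also have "\<dots> = (\<Sum>j<n. (\<Sum>a<N. f j a * y a) * (\<Sum>b<N. g j b * v b))"
    by (simp add: sum_product)
  finally show ?thesis .
qed

lemma loewner_le_scalar_avg_outer:
  assumes "0 < n" and bound: "\<And>v. (\<Sum>j<n. (\<Sum>a<N. f j a * v a)\<^sup>2) \<le> K * (\<Sum>a<N. (v a)\<^sup>2)"
  shows "loewner_le_scalar N (avg_outer n f f) (K / real n)"
  unfolding loewner_le_scalar_def
proof
  fix v
  have "(\<Sum>a<N. \<Sum>b<N. v a * avg_outer n f f a b * v b)
      = (\<Sum>a<N. v a * (\<Sum>b<N. avg_outer n f f a b * v b))"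
    by (simp add: sum_distrib_left mult.assoc)
  also have "\<dots> = (1 / real n) * (\<Sum>j<n. (\<Sum>a<N. f j a * v a)\<^sup>2)"
    by (simp add: bilinear_avg_outer power2_eq_square)
  also have "\<dots> \<le> (1 / real n) * (K * (\<Sum>a<N. (v a)\<^sup>2))"
    using assms by (intro mult_left_mono) auto
  finally show "(\<Sum>a<N. \<Sum>b<N. v a * avg_outer n f f a b * v b) \<le> K / real n * (\<Sum>a<N. (v a)\<^sup>2)"
    by simp
qed

text \<open>With \<open>y = A v\<close>: \<open>\<parallel>y\<parallel>\<^sup>2 = y\<^sup>T A v = (1/n) \<Sum>\<^sub>j (f\<^sub>j\<cdot>y)(g\<^sub>j\<cdot>v)\<close>, and Cauchy--Schwarz over \<open>j\<close>
  gives \<open>\<parallel>y\<parallel>\<^sup>4 \<le> (C/n)\<^sup>2 A\<^sup>2 B\<^sup>2 \<parallel>y\<parallel>\<^sup>2 \<parallel>v\<parallel>\<^sup>2\<close>.\<close>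

lemma spec_norm_avg_outer_le:
  assumes n: "0 < n" and C: "0 \<le> C" and A: "0 \<le> A" and B: "0 \<le> B"
    and f: "\<And>v. (\<Sum>j<n. (\<Sum>a<N. f j a * v a)\<^sup>2) \<le> C * A\<^sup>2 * (\<Sum>a<N. (v a)\<^sup>2)"
    and g: "\<And>v. (\<Sum>j<n. (\<Sum>a<N. g j a * v a)\<^sup>2) \<le> C * B\<^sup>2 * (\<Sum>a<N. (v a)\<^sup>2)"
  shows "spec_norm N N (avg_outer n f g) \<le> C / real n * A * B"
proof -
  have "mat_vec_sqnorm N N (avg_outer n f g) v \<le> (C / real n * A * B)\<^sup>2 * (\<Sum>l<N. (v l)\<^sup>2)" for v
  proof -
    define y where "y a = (\<Sum>b<N. avg_outer n f g a b * v b)" for a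
    define Y2 where "Y2 = (\<Sum>a<N. (y a)\<^sup>2)"
    define V2 where "V2 = (\<Sum>a<N. (v a)\<^sup>2)"
    have "0 \<le> Y2" "0 \<le> V2" unfolding Y2_def V2_def by (auto intro: sum_nonneg)
    have "Y2 = (\<Sum>a<N. y a * (\<Sum>b<N. avg_outer n f g a b * v b))"
      unfolding Y2_def y_def by (simp add: power2_eq_square)
    also have "\<dots> = (1 / real n) * (\<Sum>j<n. (\<Sum>a<N. f j a * y a) * (\<Sum>b<N. g j b * v b))"
      by (rule bilinear_avg_outer)
    finally have Y2_eq: "Y2 = \<dots>" .
    have "Y2\<^sup>2 \<le> (1 / real n)\<^sup>2 * ((\<Sum>j<n. (\<Sum>a<N. f j a * y a)\<^sup>2) * (\<Sum>j<n. (\<Sum>b<N. g j b * v b)\<^sup>2))"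
      unfolding Y2_eq power_mult_distrib by (simp add: mult_left_mono Cauchy_Schwarz_ineq_sum)
    also have "\<dots> \<le> (1 / real n)\<^sup>2 * ((C * A\<^sup>2 * Y2) * (C * B\<^sup>2 * V2))"
      using f[of y] g[of v] C unfolding Y2_def V2_def
      by (intro mult_left_mono mult_mono) (auto intro!: sum_nonneg mult_nonneg_nonneg)
    also have "\<dots> = ((C / real n * A * B)\<^sup>2 * V2) * Y2"
      by (simp add: power_mult_distrib power_divide power2_eq_square mult_ac)
    finally have "Y2 * Y2 \<le> ((C / real n * A * B)\<^sup>2 * V2) * Y2" by (simp add: power2_eq_square)
    then have "Y2 \<le> (C / real n * A * B)\<^sup>2 * V2"
      using \<open>0 \<le> Y2\<close> \<open>0 \<le> V2\<close> by (cases "Y2 = 0") (auto simp: mult_le_cancel_right_pos)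
    then show ?thesis unfolding mat_vec_sqnorm_def Y2_def V2_def y_def .
  qed
  then show ?thesis using C A B by (subst spec_norm_le_iff) auto
qed

section \<open>Activations with Lipschitz derivative\<close>

lemma row_dot_diff: "row_dot p U i g - row_dot p W i g = row_dot p (\<lambda>i l. U i l - W i l) i g"
  unfolding row_dot_def by (simp add: sum_subtractf left_diff_distrib)

locale lipschitz_activation =
  fixes \<sigma> :: "real \<Rightarrow> real" and L L0 :: real
  assumes differentiable: "\<sigma> differentiable_on UNIV"
    and deriv_lipschitz: "\<forall>x y. \<bar>deriv \<sigma> x - deriv \<sigma> y\<bar> \<le> L * \<bar>x - y\<bar>"
    and abs_deriv_0_le: "\<bar>deriv \<sigma> 0\<bar> \<le> L0"
begin

lemma L_nonneg: "0 \<le> L"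
  using deriv_lipschitz[rule_format, of 1 0] abs_ge_zero[of "deriv \<sigma> 1 - deriv \<sigma> 0"] by simp

lemma L0_nonneg: "0 \<le> L0"
  using abs_deriv_0_le by linarith

lemma has_real_derivative: "(\<sigma> has_real_derivative deriv \<sigma> x) (at x)"
  using differentiable
  by (simp add: differentiable_on_def DERIV_deriv_iff_real_differentiable)

lemma abs_deriv_le: "\<bar>deriv \<sigma> t\<bar> \<le> L0 + L * \<bar>t\<bar>"
  using deriv_lipschitz[rule_format, of t 0] abs_deriv_0_le by simp

text \<open>By the mean value theorem the divided difference is \<open>\<sigma>' z\<close> for some \<open>z\<close> between \<open>a\<close> and \<open>b\<close>.\<close>

lemma abs_divided_difference_sub_deriv_le:
  assumes "a \<noteq> b"
  shows "\<bar>(\<sigma> a - \<sigma> b) / (a - b) - deriv \<sigma> b\<bar> \<le> L * \<bar>a - b\<bar>"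
proof -
  have "min a b < max a b" using assms by (simp add: min_def max_def)
  then obtain z where z: "min a b < z" "z < max a b"
    and mvt: "\<sigma> (max a b) - \<sigma> (min a b) = (max a b - min a b) * deriv \<sigma> z"
    using MVT2[of "min a b" "max a b" \<sigma> "deriv \<sigma>"] has_real_derivative by blast
  have "(\<sigma> a - \<sigma> b) / (a - b) = deriv \<sigma> z"
    using mvt assms by (cases "a < b") (simp_all add: min_def max_def field_simps)
  moreover have "\<bar>z - b\<bar> \<le> \<bar>a - b\<bar>"
    using z assms by (cases "a < b") (simp_all add: min_def max_def)
  then have "L * \<bar>z - b\<bar> \<le> L * \<bar>a - b\<bar>" by (rule mult_left_mono[OF _ L_nonneg])
  ultimately show ?thesis using deriv_lipschitz[rule_format, of z b] by linarith
qed

lemma borel_measurable_activation[measurable]: "\<sigma> \<in> borel_measurable borel"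
  by (intro borel_measurable_continuous_onI differentiable_imp_continuous_on differentiable)

lemma borel_measurable_deriv[measurable]: "deriv \<sigma> \<in> borel_measurable borel"
proof (intro borel_measurable_continuous_onI lipschitz_on_continuous_on)
  show "lipschitz_on L UNIV (deriv \<sigma>)"
    unfolding lipschitz_on_def dist_real_def using deriv_lipschitz L_nonneg by auto
qed

lemma abs_dvec1_le: "\<bar>dvec1 \<sigma> ov p W g i\<bar> \<le> \<bar>ov i\<bar> * (L0 + L * \<bar>row_dot p W i g\<bar>)"
  unfolding dvec1_def abs_mult by (intro mult_left_mono abs_deriv_le) simp

lemma abs_dvec1_sub_dvec1_le:
  "\<bar>dvec1 \<sigma> ov p U g i - dvec1 \<sigma> ov p W g i\<bar> \<le> \<bar>ov i\<bar> * (L * \<bar>row_dot p U i g - row_dot p W i g\<bar>)"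
  unfolding dvec1_def right_diff_distrib[symmetric] abs_mult
  by (intro mult_left_mono deriv_lipschitz[rule_format]) simp

lemma abs_dvec2_sub_dvec1_le:
  "\<bar>dvec2 \<sigma> ov p U W g i - dvec1 \<sigma> ov p W g i\<bar> \<le> \<bar>ov i\<bar> * (L * \<bar>row_dot p U i g - row_dot p W i g\<bar>)"
proof (cases "row_dot p U i g = row_dot p W i g")
  case False
  let ?a = "row_dot p U i g" and ?b = "row_dot p W i g"
  have "dvec2 \<sigma> ov p U W g i - dvec1 \<sigma> ov p W g i = ov i * ((\<sigma> ?a - \<sigma> ?b) / (?a - ?b) - deriv \<sigma> ?b)"
    unfolding dvec2_def dvec1_def using False by (simp add: algebra_simps)
  then show ?thesis
    using abs_divided_difference_sub_deriv_le[OF False] by (simp add: abs_mult mult_left_mono)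
qed (simp add: dvec2_def dvec1_def)

lemma sum_sq_dvec1_le:
  assumes ov: "\<forall>i<h. \<bar>ov i\<bar> \<le> omax" and lam: "0 \<le> lam"
    and proj: "\<forall>i<h. \<bar>row_dot p W i g\<bar> \<le> 5 * vec_norm p (W i) * lam"
  shows "(\<Sum>i<h. (dvec1 \<sigma> ov p W g i)\<^sup>2) \<le> (sqrt (real h) * (omax * (L0 + L * (5 * smax h p W * lam))))\<^sup>2"
proof -
  let ?b = "omax * (L0 + L * (5 * smax h p W * lam))"
  have "\<bar>dvec1 \<sigma> ov p W g i\<bar> \<le> ?b" if i: "i < h" for i
  proof -
    have "\<bar>row_dot p W i g\<bar> \<le> 5 * smax h p W * lam"
      using proj i vec_norm_row_le_spec_norm[OF i, of p W] lam
      unfolding smax_def by (fastforce intro: order_trans mult_right_mono)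
    then have "L0 + L * \<bar>row_dot p W i g\<bar> \<le> L0 + L * (5 * smax h p W * lam)"
      using L_nonneg by (simp add: mult_left_mono)
    then show ?thesis
      using abs_dvec1_le[of ov p W g i] ov i L0_nonneg L_nonneg
      by (meson abs_ge_zero add_nonneg_nonneg mult_mono mult_nonneg_nonneg order_trans)
  qed
  then have "(\<Sum>i<h. (dvec1 \<sigma> ov p W g i)\<^sup>2) \<le> (\<Sum>i<h. ?b\<^sup>2)"
    by (intro sum_mono) (metis abs_ge_zero lessThan_iff power2_abs power_mono)
  then show ?thesis by (simp add: power_mult_distrib)
qed

lemma sum_sq_dvec_sub_le:
  assumes ov: "\<forall>i<h. \<bar>ov i\<bar> \<le> omax" and omax: "0 \<le> omax" and lam: "0 \<le> lam"
    and proj: "\<forall>i<h. \<bar>row_dot p (\<lambda>i l. U i l - W i l) i g\<bar> \<le> 5 * vec_norm p (\<lambda>l. U i l - W i l) * lam"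
    and R: "frob_norm h p (\<lambda>i l. U i l - W i l) \<le> R"
  shows "(\<Sum>i<h. (dvec2 \<sigma> ov p U W g i - dvec1 \<sigma> ov p W g i)\<^sup>2) \<le> (5 * omax * L * lam * R)\<^sup>2"
    and "(\<Sum>i<h. (dvec1 \<sigma> ov p U g i - dvec1 \<sigma> ov p W g i)\<^sup>2) \<le> (5 * omax * L * lam * R)\<^sup>2"
proof -
  have c: "0 \<le> 5 * omax * L * lam" using omax L_nonneg lam by simp
  have key: "\<bar>ov i\<bar> * (L * \<bar>row_dot p U i g - row_dot p W i g\<bar>)
           \<le> 5 * omax * L * lam * vec_norm p (\<lambda>l. U i l - W i l)" if i: "i < h" for i
  proof -
    have "\<bar>ov i\<bar> * (L * \<bar>row_dot p U i g - row_dot p W i g\<bar>)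
        \<le> omax * (L * (5 * vec_norm p (\<lambda>l. U i l - W i l) * lam))"
      using ov proj i L_nonneg omax unfolding row_dot_diff
      by (intro mult_mono mult_left_mono) auto
    then show ?thesis by (simp add: mult_ac)
  qed
  show "(\<Sum>i<h. (dvec2 \<sigma> ov p U W g i - dvec1 \<sigma> ov p W g i)\<^sup>2) \<le> (5 * omax * L * lam * R)\<^sup>2"
    using key abs_dvec2_sub_dvec1_le order_trans
    by (intro sum_sq_le_of_abs_le_vec_norm[OF _ c R]) blast
  show "(\<Sum>i<h. (dvec1 \<sigma> ov p U g i - dvec1 \<sigma> ov p W g i)\<^sup>2) \<le> (5 * omax * L * lam * R)\<^sup>2"
    using key abs_dvec1_sub_dvec1_le order_trans
    by (intro sum_sq_le_of_abs_le_vec_norm[OF _ c R]) blast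
qed

end

lemma H1_eq_avg_outer:
  "H1 \<sigma> ov p n Ws x
     = avg_outer n (\<lambda>j. kron p (dvec1 \<sigma> ov p Ws (x j)) (x j)) (\<lambda>j. kron p (dvec1 \<sigma> ov p Ws (x j)) (x j))"
  by (simp add: fun_eq_iff H1_def avg_outer_def rho1_def)

lemma H2_eq_avg_outer:
  "H2 \<sigma> ov p n Ws U x
     = avg_outer n (\<lambda>j. kron p (dvec1 \<sigma> ov p Ws (x j)) (x j))
         (\<lambda>j. kron p (\<lambda>i. dvec2 \<sigma> ov p U Ws (x j) i - dvec1 \<sigma> ov p Ws (x j) i) (x j))"
  by (simp add: fun_eq_iff H2_def avg_outer_def rho1_def rho2_def kron_def left_diff_distrib)

lemma H3_eq_avg_outer:
  "H3 \<sigma> ov p n Ws U x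
     = avg_outer n (\<lambda>j. kron p (\<lambda>i. dvec1 \<sigma> ov p U (x j) i - dvec1 \<sigma> ov p Ws (x j) i) (x j))
         (\<lambda>j. kron p (dvec2 \<sigma> ov p U Ws (x j)) (x j))"
  by (simp add: fun_eq_iff H3_def avg_outer_def rho1_def rho2_def kron_def left_diff_distrib)

context lipschitz_activation
begin

lemma scale_factors_nonneg:
  assumes "0 \<le> omax" "0 \<le> ln (real p)"
  shows "0 \<le> omax * (5 * L * smax h p Ws * sqrt (real h * ln (real p)) + L0 * sqrt (real h))"
    and "0 \<le> 5 * omax * L * sqrt (ln (real p))"
  using assms L_nonneg L0_nonneg spec_norm_nonneg[of h p Ws] by (simp_all add: smax_def)

lemma sum_sq_coefficients_le:
  fixes Ws U :: "nat \<Rightarrow> nat \<Rightarrow> real" and g ov :: "nat \<Rightarrow> real" and h p :: nat and R omax :: real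
  assumes h: "0 < h" and lnp: "0 \<le> ln (real p)"
    and R: "0 < R" "R \<le> frob_norm h p Ws" "frob_norm h p (\<lambda>i l. U i l - Ws i l) \<le> R"
    and ov: "\<forall>i<h. \<bar>ov i\<bar> \<le> omax"
    and proj_W: "\<forall>i<h. \<bar>row_dot p Ws i g\<bar> \<le> 5 * vec_norm p (Ws i) * sqrt (ln (real p))"
    and proj_D: "\<forall>i<h. \<bar>row_dot p (\<lambda>i l. U i l - Ws i l) i g\<bar>
                    \<le> 5 * vec_norm p (\<lambda>l. U i l - Ws i l) * sqrt (ln (real p))"
  defines "B \<equiv> omax * (5 * L * smax h p Ws * sqrt (real h * ln (real p)) + L0 * sqrt (real h))"
    and "P \<equiv> 5 * omax * L * sqrt (ln (real p))"
  shows "(\<Sum>i<h. (dvec1 \<sigma> ov p Ws g i)\<^sup>2) \<le> B\<^sup>2"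
    and "(\<Sum>i<h. (dvec2 \<sigma> ov p U Ws g i - dvec1 \<sigma> ov p Ws g i)\<^sup>2) \<le> (R * P)\<^sup>2"
    and "(\<Sum>i<h. (dvec1 \<sigma> ov p U g i - dvec1 \<sigma> ov p Ws g i)\<^sup>2) \<le> (R * P)\<^sup>2"
    and "(\<Sum>i<h. (dvec2 \<sigma> ov p U Ws g i)\<^sup>2) \<le> (2 * B)\<^sup>2"
proof -
  define lam where "lam = sqrt (ln (real p))"
  have lam0: "0 \<le> lam" using lnp by (simp add: lam_def)
  have omax0: "0 \<le> omax" using ov h by force
  have B0: "0 \<le> B" and P0: "0 \<le> P"
    unfolding B_def P_def using scale_factors_nonneg[OF omax0 lnp] .
  have B_eq: "B = sqrt (real h) * (omax * (L0 + L * (5 * smax h p Ws * lam)))"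
    unfolding B_def lam_def using lnp by (simp add: real_sqrt_mult algebra_simps)
  have P_eq: "P = 5 * omax * L * lam" unfolding P_def lam_def ..
  show d1: "(\<Sum>i<h. (dvec1 \<sigma> ov p Ws g i)\<^sup>2) \<le> B\<^sup>2"
    unfolding B_eq using sum_sq_dvec1_le[OF ov lam0] proj_W by (simp add: lam_def)
  show e: "(\<Sum>i<h. (dvec2 \<sigma> ov p U Ws g i - dvec1 \<sigma> ov p Ws g i)\<^sup>2) \<le> (R * P)\<^sup>2"
    and "(\<Sum>i<h. (dvec1 \<sigma> ov p U g i - dvec1 \<sigma> ov p Ws g i)\<^sup>2) \<le> (R * P)\<^sup>2"
    using sum_sq_dvec_sub_le[OF ov omax0 lam0 _ R(3)] proj_D by (simp_all add: P_eq lam_def mult_ac)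
  have "R \<le> sqrt (real h) * smax h p Ws"
    using R(2) frob_norm_le_spec_norm[of h p Ws] unfolding smax_def by linarith
  then have "R * P \<le> (sqrt (real h) * smax h p Ws) * P" using P0 by (rule mult_right_mono)
  also have "\<dots> = sqrt (real h) * (omax * L * (5 * smax h p Ws * lam))" unfolding P_eq by (simp add: mult_ac)
  also have "\<dots> \<le> B"
    unfolding B_eq using omax0 L0_nonneg by (intro mult_left_mono) (auto simp: algebra_simps)
  finally have "R * P \<le> B" .
  have "(\<Sum>i<h. (dvec1 \<sigma> ov p Ws g i + (dvec2 \<sigma> ov p U Ws g i - dvec1 \<sigma> ov p Ws g i))\<^sup>2) \<le> (B + R * P)\<^sup>2"
    using d1 e B0 R(1) P0 by (intro sum_sq_add_le) auto
  also have "\<dots> \<le> (2 * B)\<^sup>2" using \<open>R * P \<le> B\<close> B0 R(1) P0 by (intro power_mono) auto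
  finally show "(\<Sum>i<h. (dvec2 \<sigma> ov p U Ws g i)\<^sup>2) \<le> (2 * B)\<^sup>2" by simp
qed

lemma H_bounds:
  fixes Ws U x :: "nat \<Rightarrow> nat \<Rightarrow> real" and ov :: "nat \<Rightarrow> real" and h p n :: nat and R q omax :: real
  assumes p: "0 < p" and n: "0 < n" and h: "0 < h"
    and R: "0 < R" "R \<le> frob_norm h p Ws" "frob_norm h p (\<lambda>i l. U i l - Ws i l) \<le> R"
    and q: "1 \<le> q" and lnp: "0 \<le> ln (real p)"
    and ov: "\<forall>i<h. \<bar>ov i\<bar> \<le> omax"
    and proj_W: "\<And>j. j < n \<Longrightarrow> \<forall>i<h. \<bar>row_dot p Ws i (x j)\<bar> \<le> 5 * vec_norm p (Ws i) * sqrt (ln (real p))"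
    and proj_D: "\<And>j. j < n \<Longrightarrow> \<forall>i<h. \<bar>row_dot p (\<lambda>i l. U i l - Ws i l) i (x j)\<bar>
                    \<le> 5 * vec_norm p (\<lambda>l. U i l - Ws i l) * sqrt (ln (real p))"
    and gram: "gram_le n p x (6 * q * real n)"
  defines "B \<equiv> omax * (5 * L * smax h p Ws * sqrt (real h * ln (real p)) + L0 * sqrt (real h))"
    and "P \<equiv> 5 * omax * L * sqrt (ln (real p))"
  shows "loewner_le_scalar (h * p) (H1 \<sigma> ov p n Ws x) (6 * q * B\<^sup>2)"
    and "spec_norm (h * p) (h * p) (H2 \<sigma> ov p n Ws U x) \<le> 6 * R * q * B * P"
    and "spec_norm (h * p) (h * p) (H3 \<sigma> ov p n Ws U x) \<le> 12 * R * q * B * P"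
proof -
  define C where "C = 6 * q * real n"
  have C0: "0 \<le> C" using q by (simp add: C_def)
  have "0 \<le> omax" using ov h by force
  then have B0: "0 \<le> B" and P0: "0 \<le> P"
    unfolding B_def P_def using scale_factors_nonneg lnp by blast+
  note coeff = sum_sq_coefficients_le[OF h lnp R ov proj_W proj_D, folded B_def P_def]
  note kron_bound = gram_le_kron[OF p gram[folded C_def] C0]
  have "loewner_le_scalar (h * p) (H1 \<sigma> ov p n Ws x) (C * B\<^sup>2 / real n)"
    unfolding H1_eq_avg_outer by (rule loewner_le_scalar_avg_outer[OF n kron_bound[OF coeff(1)]])
  then show "loewner_le_scalar (h * p) (H1 \<sigma> ov p n Ws x) (6 * q * B\<^sup>2)"
    using n by (simp add: C_def mult.assoc)
  have "spec_norm (h * p) (h * p) (H2 \<sigma> ov p n Ws U x) \<le> C / real n * B * (R * P)"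
    unfolding H2_eq_avg_outer using B0 R(1) P0
    by (intro spec_norm_avg_outer_le[OF n C0 _ _ kron_bound[OF coeff(1)] kron_bound[OF coeff(2)]]) simp_all
  then show "spec_norm (h * p) (h * p) (H2 \<sigma> ov p n Ws U x) \<le> 6 * R * q * B * P"
    using n by (simp add: C_def mult_ac)
  have "spec_norm (h * p) (h * p) (H3 \<sigma> ov p n Ws U x) \<le> C / real n * (R * P) * (2 * B)"
    unfolding H3_eq_avg_outer using B0 R(1) P0
    by (intro spec_norm_avg_outer_le[OF n C0 _ _ kron_bound[OF coeff(3)] kron_bound[OF coeff(4)]]) simp_all
  then show "spec_norm (h * p) (h * p) (H3 \<sigma> ov p n Ws U x) \<le> 12 * R * q * B * P"
    using n by (simp add: C_def mult_ac)
qed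

end

section \<open>Measurability of the good event\<close>

text \<open>Vectors with rational coordinates of a common denominator; testing a continuous inequality
  on them turns the uncountable quantifier in the good event into a countable one.\<close>

definition rat_vec :: "nat \<times> int list \<Rightarrow> nat \<Rightarrow> real" where
  "rat_vec kz a = (if a < length (snd kz) then real_of_int (snd kz ! a) / real (Suc (fst kz)) else 0)"

lemma floor_mult_div_tendsto: "(\<lambda>k. real_of_int \<lfloor>t * real (Suc k)\<rfloor> / real (Suc k)) \<longlonglongrightarrow> t"
proof (rule tendsto_sandwich[of "\<lambda>k. t - inverse (real (Suc k))" _ _ "\<lambda>_. t"])
  show "\<forall>\<^sub>F k in sequentially. t - inverse (real (Suc k)) \<le> real_of_int \<lfloor>t * real (Suc k)\<rfloor> / real (Suc k)"
  proof (intro always_eventually allI)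
    fix k
    have "t * real (Suc k) - 1 \<le> real_of_int \<lfloor>t * real (Suc k)\<rfloor>" by linarith
    then have "(t * real (Suc k) - 1) / real (Suc k) \<le> real_of_int \<lfloor>t * real (Suc k)\<rfloor> / real (Suc k)"
      by (intro divide_right_mono) auto
    then show "t - inverse (real (Suc k)) \<le> real_of_int \<lfloor>t * real (Suc k)\<rfloor> / real (Suc k)"
      by (simp add: field_simps del: of_nat_Suc)
  qed
  show "\<forall>\<^sub>F k in sequentially. real_of_int \<lfloor>t * real (Suc k)\<rfloor> / real (Suc k) \<le> t"
    by (intro always_eventually allI) (simp add: divide_le_eq del: of_nat_Suc)
  show "(\<lambda>k. t - inverse (real (Suc k))) \<longlonglongrightarrow> t"
    using tendsto_diff[OF tendsto_const LIMSEQ_inverse_real_of_nat] by simp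
qed simp

lemma all_le_iff_all_rat_vec:
  fixes F G :: "(nat \<Rightarrow> real) \<Rightarrow> real"
  assumes F: "\<And>u v. (\<And>a. a < N \<Longrightarrow> (\<lambda>k. u k a) \<longlonglongrightarrow> v a) \<Longrightarrow> (\<lambda>k. F (u k)) \<longlonglongrightarrow> F v"
    and G: "\<And>u v. (\<And>a. a < N \<Longrightarrow> (\<lambda>k. u k a) \<longlonglongrightarrow> v a) \<Longrightarrow> (\<lambda>k. G (u k)) \<longlonglongrightarrow> G v"
  shows "(\<forall>v. F v \<le> G v) \<longleftrightarrow> (\<forall>kz. F (rat_vec kz) \<le> G (rat_vec kz))"
proof (intro iffI allI)
  fix v
  assume rat: "\<forall>kz. F (rat_vec kz) \<le> G (rat_vec kz)"
  define u where "u k = rat_vec (k, map (\<lambda>a. \<lfloor>v a * real (Suc k)\<rfloor>) [0..<N])" for k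
  have conv: "(\<lambda>k. u k a) \<longlonglongrightarrow> v a" if "a < N" for a
    using floor_mult_div_tendsto[of "v a"] that by (simp add: u_def rat_vec_def)
  show "F v \<le> G v"
    using rat by (intro LIMSEQ_le[OF F[OF conv] G[OF conv]]) (auto simp: u_def)
qed auto

lemma sets_Collect_all_le:
  fixes F G :: "'a \<Rightarrow> (nat \<Rightarrow> real) \<Rightarrow> real"
  assumes "\<And>v. (\<lambda>x. F x v) \<in> borel_measurable M" "\<And>v. (\<lambda>x. G x v) \<in> borel_measurable M"
    and "\<And>x u v. (\<And>a. a < N \<Longrightarrow> (\<lambda>k. u k a) \<longlonglongrightarrow> v a) \<Longrightarrow> (\<lambda>k. F x (u k)) \<longlonglongrightarrow> F x v"
    and "\<And>x u v. (\<And>a. a < N \<Longrightarrow> (\<lambda>k. u k a) \<longlonglongrightarrow> v a) \<Longrightarrow> (\<lambda>k. G x (u k)) \<longlonglongrightarrow> G x v"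
  shows "{x\<in>space M. \<forall>v. F x v \<le> G x v} \<in> sets M"
proof -
  have "{x\<in>space M. \<forall>v. F x v \<le> G x v} = {x\<in>space M. \<forall>kz. F x (rat_vec kz) \<le> G x (rat_vec kz)}"
    using all_le_iff_all_rat_vec[of N "F x" "G x" for x] assms(3,4) by blast
  also have "\<dots> \<in> sets M"
    using assms(1,2) by measurable
  finally show ?thesis .
qed

lemma sets_loewner_le_scalar:
  assumes meas: "\<And>a b. (\<lambda>x. A x a b) \<in> borel_measurable M"
  shows "{x \<in> space M. loewner_le_scalar N (A x) c} \<in> sets M"
  unfolding loewner_le_scalar_def
  using meas[measurable]
  by (intro sets_Collect_all_le[where N = N]) (measurable, (intro tendsto_intros; auto)+)

lemma sets_spec_norm_le:
  assumes meas: "\<And>a b. (\<lambda>x. A x a b) \<in> borel_measurable M" and "0 \<le> c"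
  shows "{x \<in> space M. spec_norm N N (A x) \<le> c} \<in> sets M"
  unfolding spec_norm_le_iff[OF \<open>0 \<le> c\<close>] mat_vec_sqnorm_def
  using meas[measurable]
  by (intro sets_Collect_all_le[where N = N]) (measurable, (intro tendsto_intros; auto)+)

context lipschitz_activation
begin

lemma borel_measurable_H:
  shows "(\<lambda>x. H1 \<sigma> ov p n Ws x a b) \<in> borel_measurable (gauss_sample n p)"
    and "(\<lambda>x. H2 \<sigma> ov p n Ws U x a b) \<in> borel_measurable (gauss_sample n p)"
    and "(\<lambda>x. H3 \<sigma> ov p n Ws U x a b) \<in> borel_measurable (gauss_sample n p)"
  unfolding H1_def H2_def H3_def rho1_def rho2_def kron_def dvec1_def dvec2_def row_dot_def
  by measurable

end

section \<open>Probability of the exceptional event\<close>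

lemma emeasure_UN_le_card_mult:
  assumes "finite I" "\<And>i. i \<in> I \<Longrightarrow> A i \<in> sets M" "\<And>i. i \<in> I \<Longrightarrow> emeasure M (A i) \<le> ennreal c"
    and "0 \<le> c"
  shows "emeasure M (\<Union>i\<in>I. A i) \<le> ennreal (real (card I) * c)"
proof -
  have "emeasure M (\<Union>i\<in>I. A i) \<le> (\<Sum>i\<in>I. emeasure M (A i))"
    using assms by (intro emeasure_subadditive_finite) auto
  also have "\<dots> \<le> (\<Sum>i\<in>I. ennreal c)" using assms(3) by (rule sum_mono)
  also have "\<dots> = ennreal (real (card I) * c)"
    using assms(4) by (simp add: ennreal_mult ennreal_of_nat_eq_real_of_nat)
  finally show ?thesis .
qed

definition row_tail_event :: "nat \<Rightarrow> nat \<Rightarrow> (nat \<Rightarrow> real) \<Rightarrow> nat \<Rightarrow> (nat \<Rightarrow> nat \<Rightarrow> real) set" where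
  "row_tail_event n p w j = {x \<in> space (gauss_sample n p).
      5 * vec_norm p w * sqrt (ln (real p)) < \<bar>\<Sum>l<p. w l * x j l\<bar>}"

lemma sets_row_tail_event[measurable]: "row_tail_event n p w j \<in> sets (gauss_sample n p)"
  unfolding row_tail_event_def by measurable

lemma emeasure_row_tail_event:
  assumes j: "j < n" and p: "2 \<le> p"
  shows "emeasure (gauss_sample n p) (row_tail_event n p w j) \<le> ennreal (2 * real p powr (-25/2))"
proof (cases "vec_norm p w = 0")
  case True
  then have "\<And>l. l < p \<Longrightarrow> w l = 0" by (simp add: vec_norm_def L2_set_eq_0_iff)
  then have "row_tail_event n p w j = {}" using True by (simp add: row_tail_event_def)
  then show ?thesis by simp
next
  case False
  then have W: "0 < (\<Sum>l<p. (w l)\<^sup>2)"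
    by (metis vec_norm_sq order_less_le sum_nonneg zero_le_power2 zero_less_power2)
  have lnp: "0 \<le> ln (real p)" using p by simp
  let ?t = "5 * vec_norm p w * sqrt (ln (real p))"
  have "emeasure (gauss_sample n p) (row_tail_event n p w j)
      \<le> ennreal (2 * exp (- ?t\<^sup>2 / (2 * (\<Sum>l<p. (w l)\<^sup>2))))"
    unfolding row_tail_event_def using lnp
    by (intro gauss_sample_abs_linear_tail[OF j W]) (simp add: vec_norm_def)
  also have "- ?t\<^sup>2 / (2 * (\<Sum>l<p. (w l)\<^sup>2)) = (-25/2) * ln (real p)"
    using W lnp by (simp add: power_mult_distrib vec_norm_sq field_simps)
  also have "exp ((-25/2) * ln (real p)) = real p powr (-25/2)"
    using p by (simp add: powr_def)
  finally show ?thesis .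
qed

lemma emeasure_row_tail_events:
  assumes "2 \<le> p"
  shows "emeasure (gauss_sample n p) (\<Union>i<h. \<Union>j<n. row_tail_event n p (W i) j)
           \<le> ennreal (2 * real h * real n * real p powr (-25/2))"
proof -
  have "(\<Union>i<h. \<Union>j<n. row_tail_event n p (W i) j)
      = (\<Union>ij\<in>{..<h} \<times> {..<n}. row_tail_event n p (W (fst ij)) (snd ij))"
    by force
  also have "emeasure (gauss_sample n p) \<dots> \<le> ennreal (real (card ({..<h} \<times> {..<n})) * (2 * real p powr (-25/2)))"
    using emeasure_row_tail_event assms by (intro emeasure_UN_le_card_mult) auto
  finally show ?thesis by (simp add: card_cartesian_product mult_ac)
qed

definition net_tail_event :: "nat \<Rightarrow> nat \<Rightarrow> real \<Rightarrow> (nat \<Rightarrow> nat \<Rightarrow> real) set" where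
  "net_tail_event n p T = {x \<in> space (gauss_sample n p).
      \<exists>w\<in>grid_net p. T < (\<Sum>j<n. (\<Sum>l<p. w l * x j l)\<^sup>2)}"

lemma net_tail_event_eq_UN:
  "net_tail_event n p T
     = (\<Union>w\<in>grid_net p. {x \<in> space (gauss_sample n p). T < (\<Sum>j<n. (\<Sum>l<p. w l * x j l)\<^sup>2)})"
  unfolding net_tail_event_def by auto

lemma sets_net_tail_event[measurable]: "net_tail_event n p T \<in> sets (gauss_sample n p)"
  unfolding net_tail_event_eq_UN by (intro sets.finite_UN finite_grid_net) measurable

text \<open>The exponent \<open>100/441\<close> is the largest \<open>\<mu>\<close> admitted by \<open>gauss_sample_sum_squares_tail\<close>
  for net points, whose norm is at most \<open>21/20\<close>.\<close>

lemma emeasure_net_tail_event: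
  "emeasure (gauss_sample n p) (net_tail_event n p T)
     \<le> ennreal (real (card (grid_net p)) * (sqrt 2 ^ n * exp (- (100/441) * T)))"
  unfolding net_tail_event_eq_UN
proof (intro emeasure_UN_le_card_mult finite_grid_net)
  fix w assume "w \<in> grid_net p"
  then have "(vec_norm p w)\<^sup>2 \<le> (21/20)\<^sup>2"
    by (intro power_mono) (auto simp: grid_net_def vec_norm_def)
  then have "(\<Sum>l<p. (w l)\<^sup>2) \<le> 441/400" by (simp add: vec_norm_sq power_divide)
  then have "2 * (100/441) * (\<Sum>l<p. (w l)\<^sup>2) \<le> 1/2" by simp
  then show "emeasure (gauss_sample n p) {x \<in> space (gauss_sample n p). T < (\<Sum>j<n. (\<Sum>l<p. w l * x j l)\<^sup>2)}
      \<le> ennreal (sqrt 2 ^ n * exp (- (100/441) * T))"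
    by (intro gauss_sample_sum_squares_tail) auto
qed auto

text \<open>The hypothesis \<open>8 p ln p \<le> q n\<close> makes the sample size dominate the entropy
  \<open>p ln (40p + 1) \<le> 5 p ln p\<close> of the net.\<close>

lemma card_grid_net_tail_le:
  fixes p n :: nat and q :: real
  assumes p: "3 \<le> p" and n: "1 \<le> n" and q: "1 \<le> q" and qn: "8 * real p * ln (real p) \<le> q * real n"
  shows "real (40 * p + 1) ^ p * (sqrt 2 ^ n * exp (- (361/294) * (q * real n)))
           \<le> exp (- q * real n / (4 * real p))"
proof -
  have pp: "0 < real p" using p by simp
  have "real (40 * p + 1) \<le> real p ^ 5"
  proof -
    have "81 * real p \<le> real p ^ 4 * real p"
      using power_mono[of 3 "real p" 4] p pp by (intro mult_right_mono) auto
    also have "\<dots> = real p ^ 5" by (simp add: eval_nat_numeral)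
    finally show ?thesis using p by simp
  qed
  then have "real (40 * p + 1) ^ p \<le> (real p ^ 5) ^ p" by (intro power_mono) auto
  also have "\<dots> = exp (5 * real p * ln (real p))"
    using pp exp_of_nat_mult[of "p * 5" "ln (real p)"] by (simp add: power_mult[symmetric] mult_ac)
  finally have net: "real (40 * p + 1) ^ p \<le> exp (5 * real p * ln (real p))" .
  have sqrt2: "sqrt 2 ^ n = exp (real n * (ln 2 / 2))"
    using exp_of_nat_mult[of n "ln (2::real) / 2"] by (simp add: powr_half_sqrt[symmetric] powr_def)
  have qn0: "0 \<le> q * real n" using q n by simp
  have "real n * (ln 2 / 2) \<le> real n * (1/2)" using ln_2_less_1 by (intro mult_left_mono) auto
  also have "\<dots> \<le> 1/2 * (q * real n)" using q n by simp
  finally have exp_n: "real n * (ln 2 / 2) \<le> 1/2 * (q * real n)" .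
  have exp_p: "q * real n / (4 * real p) \<le> q * real n / 12"
    using p qn0 by (intro divide_left_mono) auto
  have "real (40 * p + 1) ^ p * (sqrt 2 ^ n * exp (- (361/294) * (q * real n)))
      \<le> exp (5 * real p * ln (real p)) * (exp (real n * (ln 2 / 2)) * exp (- (361/294) * (q * real n)))"
    unfolding sqrt2 by (intro mult_right_mono net) auto
  also have "\<dots> = exp (5 * real p * ln (real p) + real n * (ln 2 / 2) - (361/294) * (q * real n))"
    by (simp add: exp_add[symmetric] exp_diff)
  also have "\<dots> \<le> exp (- q * real n / (4 * real p))"
    using qn exp_n exp_p qn0 by simp
  finally show ?thesis .
qed

lemma measure_bad_event_le:
  fixes h :: nat and q :: real and U Ws :: "nat \<Rightarrow> nat \<Rightarrow> real"
  assumes p: "3 \<le> p" and n: "1 \<le> n" and q: "1 \<le> q" and qn: "8 * real p * ln (real p) \<le> q * real n"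
  defines "Bad \<equiv> (\<Union>i<h. \<Union>j<n. row_tail_event n p (Ws i) j)
                \<union> (\<Union>i<h. \<Union>j<n. row_tail_event n p (\<lambda>l. U i l - Ws i l) j)
                \<union> net_tail_event n p ((361/400) * (6 * q * real n))"
  shows "Bad \<in> sets (gauss_sample n p)"
    and "measure (gauss_sample n p) Bad
           \<le> 4 * real h * real n * real p powr (-25/2) + exp (- q * real n / (4 * real p))"
proof -
  let ?M = "gauss_sample n p"
  interpret M: prob_space ?M by (rule prob_space_gauss_sample)
  show sets: "Bad \<in> sets ?M" unfolding Bad_def by measurable
  have net: "emeasure ?M (net_tail_event n p ((361/400) * (6 * q * real n)))
      \<le> ennreal (exp (- q * real n / (4 * real p)))"
  proof -
    have "real (card (grid_net p)) \<le> real (40 * p + 1) ^ p"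
      using card_grid_net_le[of p] by (metis of_nat_le_iff of_nat_power)
    then have "real (card (grid_net p)) * (sqrt 2 ^ n * exp (- (100/441) * ((361/400) * (6 * q * real n))))
        \<le> exp (- q * real n / (4 * real p))"
      using card_grid_net_tail_le[OF p n q qn] by (auto intro: order_trans[OF mult_right_mono])
    then show ?thesis by (intro order_trans[OF emeasure_net_tail_event] ennreal_leI)
  qed
  have "emeasure ?M Bad
      \<le> ennreal (2 * real h * real n * real p powr (-25/2)) + ennreal (2 * real h * real n * real p powr (-25/2))
         + ennreal (exp (- q * real n / (4 * real p)))"
    unfolding Bad_def using p
    by (intro order_trans[OF emeasure_subadditive] order_trans[OF add_mono[OF emeasure_subadditive]]
        add_mono emeasure_row_tail_events net) auto
  then have "ennreal (measure ?M Bad)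
      \<le> ennreal (4 * real h * real n * real p powr (-25/2) + exp (- q * real n / (4 * real p)))"
    by (simp add: M.emeasure_eq_measure ennreal_plus[symmetric] del: ennreal_plus)
  then show "measure ?M Bad \<le> 4 * real h * real n * real p powr (-25/2) + exp (- q * real n / (4 * real p))"
    by (subst (asm) ennreal_le_iff) (auto intro!: add_nonneg_nonneg)
qed

lemma (in lipschitz_activation) measure_good_event_ge:
  fixes Ws U :: "nat \<Rightarrow> nat \<Rightarrow> real" and ov :: "nat \<Rightarrow> real" and h p n :: nat and R q omax :: real
  assumes p: "3 \<le> p" and n: "1 \<le> n" and h: "0 < h"
    and R: "0 < R" "R \<le> frob_norm h p Ws" "frob_norm h p (\<lambda>i l. U i l - Ws i l) \<le> R"
    and q: "1 \<le> q" and qn: "8 * real p * ln (real p) \<le> q * real n"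
    and ov: "\<forall>i<h. \<bar>ov i\<bar> \<le> omax"
  defines "B \<equiv> omax * (5 * L * smax h p Ws * sqrt (real h * ln (real p)) + L0 * sqrt (real h))"
    and "P \<equiv> 5 * omax * L * sqrt (ln (real p))"
  shows "1 - (4 * real h * real n * real p powr (-25/2) + exp (- q * real n / (4 * real p)))
    \<le> measure (gauss_sample n p)
          {x \<in> space (gauss_sample n p).
             loewner_le_scalar (h * p) (H1 \<sigma> ov p n Ws x) (6 * q * B\<^sup>2)
           \<and> spec_norm (h * p) (h * p) (H2 \<sigma> ov p n Ws U x) \<le> 6 * R * q * B * P
           \<and> spec_norm (h * p) (h * p) (H3 \<sigma> ov p n Ws U x) \<le> 12 * R * q * B * P}"
    (is "_ \<le> measure ?M ?Good")
proof -
  interpret M: prob_space ?M by (rule prob_space_gauss_sample)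
  define Bad where "Bad = (\<Union>i<h. \<Union>j<n. row_tail_event n p (Ws i) j)
                \<union> (\<Union>i<h. \<Union>j<n. row_tail_event n p (\<lambda>l. U i l - Ws i l) j)
                \<union> net_tail_event n p ((361/400) * (6 * q * real n))"
  note Bad = measure_bad_event_le[OF p n q qn, where h = h and Ws = Ws and U = U, folded Bad_def]
  have p0: "0 < p" and n0: "0 < n" and lnp: "0 \<le> ln (real p)" using p n by simp_all
  have "0 \<le> omax" using ov h by force
  then have "0 \<le> B" "0 \<le> P" unfolding B_def P_def using scale_factors_nonneg lnp by blast+
  then have "0 \<le> 6 * R * q * B * P" "0 \<le> 12 * R * q * B * P" using R(1) q by simp_all
  then have good: "?Good \<in> sets ?M"
    by (intro sets.sets_Collect_conj sets_loewner_le_scalar sets_spec_norm_le borel_measurable_H)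
  have "space ?M - Bad \<subseteq> ?Good"
  proof
    fix x assume x: "x \<in> space ?M - Bad"
    then have "\<forall>i<h. \<bar>row_dot p Ws i (x j)\<bar> \<le> 5 * vec_norm p (Ws i) * sqrt (ln (real p))"
      and "\<forall>i<h. \<bar>row_dot p (\<lambda>i l. U i l - Ws i l) i (x j)\<bar>
             \<le> 5 * vec_norm p (\<lambda>l. U i l - Ws i l) * sqrt (ln (real p))" if "j < n" for j
      using that by (auto simp: Bad_def row_tail_event_def row_dot_def not_less)
    moreover have "gram_le n p x (6 * q * real n)"
      using x p q by (intro gram_le_of_grid_net) (auto simp: Bad_def net_tail_event_def not_less)
    ultimately show "x \<in> ?Good"
      using H_bounds[OF p0 n0 h R q lnp ov, folded B_def P_def] x by auto
  qed
  then have "1 - measure ?M Bad \<le> measure ?M ?Good"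
    using Bad(1) good by (simp add: M.prob_compl[symmetric] M.finite_measure_mono)
  then show ?thesis using Bad(2) by linarith
qed

lemma failure_probability_mono:
  assumes "h \<le> p" "3 \<le> p" "0 \<le> E"
  shows "1 - 4 * (real n * exp (- real p / 2) + 2 * real n * real p powr (-10) + E)
           \<le> 1 - (4 * real h * real n * real p powr (-25/2) + E)"
proof -
  have "real h * real p powr (-25/2) \<le> real p powr 1 * real p powr (-25/2)"
    using assms by (intro mult_right_mono) auto
  also have "\<dots> = real p powr (1 + (-25/2))" by (rule powr_add[symmetric])
  also have "\<dots> \<le> real p powr (-10)" using assms by (intro powr_mono) auto
  finally have "real n * (real h * real p powr (-25/2)) \<le> real n * real p powr (-10)"
    by (rule mult_left_mono) simp
  then have "real h * real n * real p powr (-25/2) \<le> real n * real p powr (-10)"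
    by (simp add: mult_ac)
  moreover have "0 \<le> real n * exp (- real p / 2)" "0 \<le> real n * real p powr (-10)" by simp_all
  ultimately show ?thesis using assms(3) unfolding distrib_left mult.assoc by linarith
qed

text \<open>For \<open>p = 2\<close> the claimed bound is trivial, as \<open>4 n e\<^sup>-\<^sup>1 \<ge> 1\<close>; this is the only use of the
  term \<open>n e\<^sup>-\<^sup>p\<^sup>/\<^sup>2\<close>.\<close>

lemma failure_probability_trivial:
  assumes "p = 2" "1 \<le> n" "0 \<le> E"
  shows "1 - 4 * (real n * exp (- real p / 2) + 2 * real n * real p powr (-10) + E) \<le> 0"
proof -
  have "1 \<le> 4 * exp (- 1::real)" using exp_le by (simp add: exp_minus field_simps)
  also have "\<dots> \<le> 4 * (real n * exp (- real p / 2))" using assms by simp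
  finally show ?thesis using assms(3) by (simp add: add_increasing2)
qed

theorem mainTheorem10:
  fixes \<sigma> :: "real \<Rightarrow> real" and ov :: "nat \<Rightarrow> real"
    and Ws U :: "nat \<Rightarrow> nat \<Rightarrow> real"
    and h p n :: nat and L L0 R :: real
  assumes "p \<ge> 2" and "h \<le> p" and "n \<ge> 1"
    and "\<sigma> differentiable_on UNIV"
    and "\<forall>x y. \<bar>deriv \<sigma> x - deriv \<sigma> y\<bar> \<le> L * \<bar>x - y\<bar>"
    and "\<bar>deriv \<sigma> 0\<bar> \<le> L0"
    and "0 < R" and "R \<le> frob_norm h p Ws"
    and "frob_norm h p (\<lambda>i l. U i l - Ws i l) \<le> R"
  shows
    "let omax = Max ((\<lambda>i. \<bar>ov i\<bar>) ` {..<h});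
         B = omax * (5 * L * smax h p Ws * sqrt (real h * ln (real p)) + L0 * sqrt (real h));
         P = 5 * omax * L * sqrt (ln (real p));
         q = max 1 (8 * real p * ln (real p) / real n)
     in measure (gauss_sample n p)
          {x \<in> space (gauss_sample n p).
             loewner_le_scalar (h * p) (H1 \<sigma> ov p n Ws x) (6 * q * B\<^sup>2)
           \<and> spec_norm (h * p) (h * p) (H2 \<sigma> ov p n Ws U x) \<le> 6 * R * q * B * P
           \<and> spec_norm (h * p) (h * p) (H3 \<sigma> ov p n Ws U x) \<le> 12 * R * q * B * P}
        \<ge> 1 - 4 * (real n * exp (- real p / 2) + 2 * real n * real p powr (-10)
                    + exp (- q * real n / (4 * real p)))"
proof -
  interpret lipschitz_activation \<sigma> L L0 using assms(4-6) by unfold_locales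
  define q where "q = max 1 (8 * real p * ln (real p) / real n)"
  have q: "1 \<le> q" and "8 * real p * ln (real p) / real n \<le> q" unfolding q_def by simp_all
  then have qn: "8 * real p * ln (real p) \<le> q * real n" using assms(3) by (simp add: divide_le_eq)
  have h: "0 < h" using assms(7,8) by (cases h) (auto simp: frob_norm_def)
  have ov: "\<forall>i<h. \<bar>ov i\<bar> \<le> Max ((\<lambda>i. \<bar>ov i\<bar>) ` {..<h})" by (auto intro: Max_ge)
  show ?thesis
  proof (cases "p = 2")
    case True
    from order_trans[OF failure_probability_trivial[OF True assms(3) exp_ge_zero] measure_nonneg]
    show ?thesis unfolding Let_def q_def .
  next
    case False
    then have p: "3 \<le> p" using assms(1) by simp
    from order_trans[OF failure_probability_mono[OF assms(2) p exp_ge_zero]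
        measure_good_event_ge[OF p assms(3) h assms(7-9) q qn ov]]
    show ?thesis unfolding Let_def q_def .
  qed
qed

end
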